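(* In the setting described in the context, suppose there exists $(z_1,\dots,z_m)\in\boldsymbol{\mathcal H}$ with $-\big(\nabla_1\boldsymbol g_1(z_1,\dots,z_m),\dots,\nabla_m\boldsymbol g_m(z_1,\dots,z_m)\big)\in\partial\boldsymbol f(z_1,\dots,z_m)$, and there exists $\chi\in]0,+\infty[$ such that for all $(x_i),(y_i)\in\boldsymbol{\mathcal H}$, $$\sum_{i=1}^m\|\nabla_i\boldsymbol g_i(x_1,\dots,x_m)-\nabla_i\boldsymbol g_i(y_1,\dots,y_m)\|^2\le\chi^2\sum_{i=1}^m\|x_i-y_i\|^2.$$ Let $\varepsilon\in]0,1/(\chi+1)[$ and let $(\gamma_n)_{n\in\mathbb N}$ be a sequence in $[\varepsilon,(1-\varepsilon)/\chi]$. For every $i$, let $x_{i,0}\in\mathcal H_i$ and let $(a_{i,n})_n,(b_{i,n})_n,(c_{i,n})_n$ be absolutely summable sequences in $\mathcal H_i$. For every $n\in\mathbb N$ define $y_{i,n}=x_{i,n}-\gamma_n(\nabla_i\boldsymbol g_i(x_{1,n},\dots,x_{m,n})+a_{i,n})$ for $i=1,\dots,m$; $(p_{1,n},\dots,p_{m,n})=\operatorname{prox}_{\gamma_n\boldsymbol f}(y_{1,n},\dots,y_{m,n})+(b_{1,n},\dots,b_{m,n})$; $q_{i,n}=p_{i,n}-\gamma_n(\nabla_i\boldsymbol g_i(p_{1,n},\dots,p_{m,n})+c_{i,n})$ and $x_{i,n+1}=x_{i,n}-y_{i,n}+q_{i,n}$ for $i=1,\dots,m$. Then there exists a solution $(\overline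 x_1,\dots,\overline x_m)$ to Problem (P) such that for every $i$, $x_{i,n}\rightharpoonup\overline x_i$ and $p_{i,n}\rightharpoonup\overline x_i$.
   Context: Let $m\ge2$ be an integer and let $\mathcal H_1,\dots,\mathcal H_m$ be real Hilbert spaces. Let $\boldsymbol{\mathcal H}=\mathcal H_1\oplus\cdots\oplus\mathcal H_m$ with inner product $\sum_i\langle x_i,y_i\rangle$. $\Gamma_0(\mathcal K)$ denotes the proper lower semicontinuous convex functions $\mathcal K\to\left]-\infty,+\infty\right]$. Let $\boldsymbol f\in\Gamma_0(\boldsymbol{\mathcal H})$ with subdifferential $\partial\boldsymbol f$. For each $i$, $\boldsymbol g_i:\boldsymbol{\mathcal H}\to\left]-\infty,+\infty\right]$ is such that for every $(x_1,\dots,x_m)$, $x\mapsto\boldsymbol g_i(x_1,\dots,x_{i-1},x,x_{i+1},\dots,x_m)$ is convex and differentiable on $\mathcal H_i$, with gradient $\nabla_i\boldsymbol g_i(x_1,\dots,x_m)$ at $x_i$; and $\sum_i\langle\nabla_i\boldsymbol g_i(\boldsymbol x)-\nabla_i\boldsymbol g_i(\boldsymbol y),x_i-y_i\rangle\ge0$ for all $\boldsymbol x,\boldsymbol y\in\boldsymbol{\mathcal H}$. Problem (P): find $x_1\in\mathcal H_1,\dots,x_m\in\mathcal H_m$ such that for each $i$, $x_i\in\operatorname{Argmin}_{x\in\mathcal H_i}\big(\boldsymbol f(x_1,\dots,x_{i-1},x,x_{i+1},\dots,x_m)+\boldsymbol g_i(x_1,\dots,x_{i-1},x,x_{i+1},\dots,x_m)\big)$.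 For $\varphi\in\Gamma_0(\mathcal K)$, $\operatorname{prox}_\varphi x=\operatorname{argmin}_{y}\big(\varphi(y)+\tfrac12\|x-y\|^2\big)$. $\rightharpoonup$ denotes weak convergence. *)

theory Defs
  imports "HOL-Analysis.Analysis"
begin

text \<open>The spaces H_1..H_m are modelled as closed linear subspaces H i (i in {1..m})
of one ambient real Hilbert space 'a.\<close>

definition PH :: "nat \<Rightarrow> (nat \<Rightarrow> 'a::real_inner set) \<Rightarrow> (nat \<Rightarrow> 'a) set" where
  "PH m H = {x. (\<forall>i\<in>{1..m}. x i \<in> H i) \<and> (\<forall>i. i \<notin> {1..m} \<longrightarrow> x i = 0)}"

definition pinner :: "nat \<Rightarrow> (nat \<Rightarrow> 'a::real_inner) \<Rightarrow> (nat \<Rightarrow> 'a) \<Rightarrow> real" where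
  "pinner m x y = (\<Sum>i\<in>{1..m}. x i \<bullet> y i)"

definition pnormsq :: "nat \<Rightarrow> (nat \<Rightarrow> 'a::real_inner) \<Rightarrow> real" where
  "pnormsq m x = (\<Sum>i\<in>{1..m}. (norm (x i))\<^sup>2)"

definition proper_on :: "(nat \<Rightarrow> 'a::real_inner) set \<Rightarrow> ((nat \<Rightarrow> 'a) \<Rightarrow> ereal) \<Rightarrow> bool" where
  "proper_on S f \<longleftrightarrow> (\<forall>x\<in>S. f x \<noteq> -\<infinity>) \<and> (\<exists>x\<in>S. f x \<noteq> \<infinity>)"

definition lsc_on :: "nat \<Rightarrow> (nat \<Rightarrow> 'a::real_inner set) \<Rightarrow> ((nat \<Rightarrow> 'a) \<Rightarrow> ereal) \<Rightarrow> bool" where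
  "lsc_on m H f \<longleftrightarrow> (\<forall>X x. (\<forall>k. X k \<in> PH m H) \<longrightarrow> x \<in> PH m H \<longrightarrow>
       (\<lambda>k. pnormsq m (X k - x)) \<longlonglongrightarrow> 0 \<longrightarrow> f x \<le> liminf (\<lambda>k. f (X k)))"

definition econvex_on :: "(nat \<Rightarrow> 'a::real_inner) set \<Rightarrow> ((nat \<Rightarrow> 'a) \<Rightarrow> ereal) \<Rightarrow> bool" where
  "econvex_on S f \<longleftrightarrow> (\<forall>x\<in>S. \<forall>y\<in>S. \<forall>t::real. 0 < t \<and> t < 1 \<longrightarrow>
       f (\<lambda>i. t *\<^sub>R x i + (1 - t) *\<^sub>R y i) \<le> ereal t * f x + ereal (1 - t) * f y)"

definition Gamma0 :: "nat \<Rightarrow> (nat \<Rightarrow> 'a::real_inner set) \<Rightarrow> ((nat \<Rightarrow> 'a) \<Rightarrow> ereal) \<Rightarrow> bool" where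
  "Gamma0 m H f \<longleftrightarrow> proper_on (PH m H) f \<and> lsc_on m H f \<and> econvex_on (PH m H) f"

definition subdiff :: "nat \<Rightarrow> (nat \<Rightarrow> 'a::real_inner set) \<Rightarrow> ((nat \<Rightarrow> 'a) \<Rightarrow> ereal) \<Rightarrow> (nat \<Rightarrow> 'a) \<Rightarrow> (nat \<Rightarrow> 'a) set" where
  "subdiff m H f x = {u \<in> PH m H. x \<in> PH m H \<and> f x \<noteq> \<infinity> \<and> f x \<noteq> -\<infinity> \<and>
       (\<forall>y\<in>PH m H. f x + ereal (pinner m u (y - x)) \<le> f y)}"

definition prox :: "nat \<Rightarrow> (nat \<Rightarrow> 'a::real_inner set) \<Rightarrow> ((nat \<Rightarrow> 'a) \<Rightarrow> ereal) \<Rightarrow> (nat \<Rightarrow> 'a) \<Rightarrow> (nat \<Rightarrow> 'a)" where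
  "prox m H \<phi> y = (THE z. z \<in> PH m H \<and> (\<forall>w\<in>PH m H.
       \<phi> z + ereal (pnormsq m (y - z) / 2) \<le> \<phi> w + ereal (pnormsq m (y - w) / 2)))"

definition weak_conv :: "(nat \<Rightarrow> 'a::real_inner) \<Rightarrow> 'a \<Rightarrow> bool" where
  "weak_conv u x \<longleftrightarrow> (\<forall>v. (\<lambda>n. u n \<bullet> v) \<longlonglongrightarrow> x \<bullet> v)"

definition solves_P :: "nat \<Rightarrow> (nat \<Rightarrow> 'a::real_inner set) \<Rightarrow> ((nat \<Rightarrow> 'a) \<Rightarrow> ereal)
    \<Rightarrow> (nat \<Rightarrow> (nat \<Rightarrow> 'a) \<Rightarrow> real) \<Rightarrow> (nat \<Rightarrow> 'a) \<Rightarrow> bool" where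
  "solves_P m H f g x \<longleftrightarrow> x \<in> PH m H \<and> (\<forall>i\<in>{1..m}. \<forall>v\<in>H i.
       f x + ereal (g i x) \<le> f (x(i := v)) + ereal (g i (x(i := v))))"

end

theory Submission
  imports Defs "HOL-Library.Diagonal_Subsequence" "HOL-Library.Function_Algebras"
begin

text \<open>
  The iteration is Tseng's forward-backward-forward splitting for the monotone inclusion
  \<open>0 \<in> \<partial>f x + B x\<close>, where \<open>B x = (\<nabla>\<^sub>i g\<^sub>i x)\<^sub>i\<close> is monotone and \<open>chi\<close>-Lipschitz. The exact step
  \<open>u = prox\<^sub>\<gamma>\<^sub>f (x - \<gamma> B x)\<close>, \<open>x' = u + \<gamma> (B x - B u)\<close> satisfies
  \<open>\<parallel>x' - z\<parallel>\<^sup>2 \<le> \<parallel>x - z\<parallel>\<^sup>2 - (1 - \<gamma>\<^sup>2 chi\<^sup>2) \<parallel>x - u\<parallel>\<^sup>2\<close> for every zero \<open>z\<close>, by monotonicity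
  of \<open>\<partial>f\<close> and \<open>B\<close>. With summable errors the distances to each zero therefore converge
  (quasi-Fejer monotonicity) and the residuals \<open>x - u\<close> tend to zero. Monotonicity then places
  every weak cluster point of the iterates among the zeros (a Minty-type argument through the
  resolvent), and Opial's lemma gives weak convergence of \<open>x\<^sub>n\<close> and hence of \<open>p\<^sub>n\<close>. A zero
  solves (P) because each \<open>g\<^sub>i\<close> lies above its tangent in the \<open>i\<close>-th variable. Weak sequential
  compactness, the Riesz representation and the existence of the proximal point all come from
  minimizing midpoint strongly convex functions, whose minimizing sequences are Cauchy.
\<close>

lemma le_if_le_add_small_multiple:
  fixes A B C :: real
  assumes le: "\<And>t. 0 < t \<Longrightarrow> t < 1 \<Longrightarrow> A \<le> B + t * C" and C: "0 \<le> C"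
  shows "A \<le> B"
proof (rule field_le_epsilon)
  fix e :: real assume e: "0 < e"
  define t where "t = min (1/2) (e / (C + 1))"
  have t: "0 < t" "t < 1" unfolding t_def using e C by auto
  have "t * C \<le> e / (C + 1) * (C + 1)" unfolding t_def using C e
    by (intro mult_mono) auto
  also have "\<dots> = e" using C by simp
  finally show "A \<le> B + e" using le[OF t] by linarith
qed

lemma linear_coeff_zero_if_quadratic_nonneg:
  fixes c N :: real
  assumes nonneg: "\<And>t. 0 \<le> t * c + t\<^sup>2 * N / 2" and N: "0 \<le> N"
  shows "c = 0"
proof -
  define t where "t = - c / (N + 1)"
  have tN: "t * (N + 1) = - c" unfolding t_def using N by simp
  have "0 \<le> (N + 1)\<^sup>2 * (t * c + t\<^sup>2 * N / 2)" using nonneg by simp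
  also have "\<dots> = (t * (N + 1)) * (N + 1) * c + (t * (N + 1))\<^sup>2 * N / 2"
    by (simp add: algebra_simps power2_eq_square)
  also have "\<dots> = c\<^sup>2 * (N / 2 - (N + 1))" unfolding tN by (simp add: algebra_simps power2_eq_square)
  finally have "0 \<le> c\<^sup>2 * (N / 2 - (N + 1))" .
  moreover have "N / 2 - (N + 1) < 0" using N by simp
  ultimately have "c\<^sup>2 \<le> 0" by (simp add: mult_le_0_iff zero_le_mult_iff)
  then show ?thesis by simp
qed

lemma quasi_Fejer_convergent:
  fixes \<alpha> \<epsilon> :: "nat \<Rightarrow> real"
  assumes nonneg: "\<And>n. 0 \<le> \<alpha> n" and step: "\<And>n. \<alpha> (Suc n) \<le> \<alpha> n + \<epsilon> n"
    and summable: "summable \<epsilon>" and \<epsilon>: "\<And>n. 0 \<le> \<epsilon> n"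
  shows "convergent \<alpha>"
proof -
  define \<beta> where "\<beta> n = \<alpha> n - (\<Sum>k<n. \<epsilon> k)" for n
  have "\<beta> (Suc n) \<le> \<beta> n" for n unfolding \<beta>_def using step[of n] by simp
  then have dec: "decseq \<beta>" by (rule decseq_SucI)
  have lower: "- suminf \<epsilon> \<le> \<beta> n" for n
    using sum_le_suminf[OF summable, of "{..<n}"] \<epsilon> nonneg[of n] unfolding \<beta>_def by force
  have upper: "\<beta> n \<le> \<alpha> 0" for n using decseqD[OF dec, of 0 n] unfolding \<beta>_def by simp
  have "norm (\<beta> n) \<le> \<alpha> 0 + suminf \<epsilon>" for n
    using lower[of n] upper[of n] nonneg[of 0] suminf_nonneg[OF summable \<epsilon>] by (simp add: abs_le_iff)
  then have "Bseq \<beta>" by (rule BseqI')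
  then have "convergent \<beta>" using dec by (intro Bseq_monoseq_convergent) (auto simp: monoseq_def decseq_def)
  moreover have "convergent (\<lambda>n. \<Sum>k<n. \<epsilon> k)"
    using summable_LIMSEQ[OF summable] by (auto simp: convergent_def)
  ultimately have "convergent (\<lambda>n. \<beta> n + (\<Sum>k<n. \<epsilon> k))" by (rule convergent_add)
  then show ?thesis unfolding \<beta>_def by simp
qed

lemma LIMSEQ_if_subseqs_have_LIMSEQ_subseq:
  fixes X :: "nat \<Rightarrow> 'b::topological_space"
  assumes "\<And>s :: nat \<Rightarrow> nat. strict_mono s \<Longrightarrow> \<exists>r. strict_mono r \<and> (\<lambda>k. X (s (r k))) \<longlonglongrightarrow> L"
  shows "X \<longlonglongrightarrow> L"
proof (rule ccontr)
  assume "\<not> X \<longlonglongrightarrow> L"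
  then obtain S where S: "open S" "L \<in> S" "\<not> eventually (\<lambda>n. X n \<in> S) sequentially"
    unfolding tendsto_def by blast
  then obtain s :: "nat \<Rightarrow> nat" where s: "strict_mono s" "\<And>k. X (s k) \<notin> S"
    using not_eventually_sequentiallyD by blast
  obtain r where "strict_mono r" "(\<lambda>k. X (s (r k))) \<longlonglongrightarrow> L" using assms[OF s(1)] by blast
  then have "eventually (\<lambda>k. X (s (r k)) \<in> S) sequentially" using S topological_tendstoD by blast
  then show False using s(2) by (auto simp: eventually_sequentially)
qed

lemma Cauchy_if_sq_dist_bound:
  fixes W :: "nat \<Rightarrow> 'a::real_normed_vector"
  assumes bound: "\<And>n k. (norm (W n - W k))\<^sup>2 \<le> 4 * (1 / Suc n + 1 / Suc k)"
  shows "Cauchy W"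
proof (rule CauchyI)
  fix e :: real assume e: "0 < e"
  obtain N :: nat where N: "8 / e\<^sup>2 < N" using reals_Archimedean2 by blast
  have N_pos: "0 < real N" using N e by (smt (verit) divide_pos_pos zero_less_power)
  show "\<exists>M. \<forall>m\<ge>M. \<forall>n\<ge>M. norm (W m - W n) < e"
  proof (intro exI allI impI)
    fix a b assume ab: "N \<le> a" "N \<le> b"
    have "1 / real (Suc a) \<le> 1 / N" "1 / real (Suc b) \<le> 1 / N" using ab N_pos by (simp_all add: frac_le)
    then have "(norm (W a - W b))\<^sup>2 \<le> 8 * (1 / N)" using bound[of a b] by argo
    also have "\<dots> < e\<^sup>2" using N e N_pos by (simp add: field_simps)
    finally show "norm (W a - W b) < e" using e by (simp add: power_less_imp_less_base)
  qed
qed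

lemma midpoint_convex_minimizing_seq:
  fixes \<Phi> :: "'b \<Rightarrow> real" and d2 :: "'b \<Rightarrow> 'b \<Rightarrow> real"
  assumes ne: "D \<noteq> {}" and bdd: "bdd_below (\<Phi> ` D)"
    and mid: "\<And>a b. a \<in> D \<Longrightarrow> b \<in> D \<Longrightarrow> \<exists>c\<in>D. \<Phi> c \<le> (\<Phi> a + \<Phi> b) / 2 - d2 a b / 8"
  shows "\<exists>W. (\<forall>n. W n \<in> D) \<and> (\<forall>n. \<Phi> (W n) < Inf (\<Phi> ` D) + 1 / Suc n) \<and>
    (\<forall>n k. d2 (W n) (W k) \<le> 4 * (1 / Suc n + 1 / Suc k))"
proof -
  define d where "d = Inf (\<Phi> ` D)"
  have d_le: "d \<le> \<Phi> w" if "w \<in> D" for w unfolding d_def using bdd that by (simp add: cInf_lower)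
  have "\<exists>w\<in>D. \<Phi> w < d + 1 / Suc n" for n
  proof -
    obtain v where "v \<in> \<Phi> ` D" "v < d + 1 / Suc n"
      using ne cInf_lessD[of "\<Phi> ` D" "d + 1 / Suc n"] unfolding d_def by auto
    then show ?thesis by blast
  qed
  then obtain W where W: "\<And>n. W n \<in> D" "\<And>n. \<Phi> (W n) < d + 1 / Suc n" by metis
  have "d2 (W n) (W k) \<le> 4 * (1 / Suc n + 1 / Suc k)" for n k
  proof -
    obtain c where c: "c \<in> D" "\<Phi> c \<le> (\<Phi> (W n) + \<Phi> (W k)) / 2 - d2 (W n) (W k) / 8"
      using mid W(1) by blast
    with d_le[OF c(1)] W(2)[of n] W(2)[of k] show ?thesis by argo
  qed
  with W show ?thesis unfolding d_def by blast
qed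

lemma subspace_closure:
  fixes S :: "'a::real_normed_vector set"
  assumes "subspace S"
  shows "subspace (closure S)"
  unfolding subspace_def
proof (intro conjI ballI allI)
  show "0 \<in> closure S" using assms closure_subset subspace_0 by blast
next
  fix x y assume "x \<in> closure S" "y \<in> closure S"
  then obtain X Y where "\<forall>n. X n \<in> S" "X \<longlonglongrightarrow> x" "\<forall>n. Y n \<in> S" "Y \<longlonglongrightarrow> y"
    unfolding closure_sequential by blast
  then show "x + y \<in> closure S" unfolding closure_sequential
    using assms subspace_add tendsto_add by (intro exI[of _ "\<lambda>n. X n + Y n"]) blast
next
  fix c :: real and x assume "x \<in> closure S"
  then obtain X where "\<forall>n. X n \<in> S" "X \<longlonglongrightarrow> x" unfolding closure_sequential by blast
  then show "c *\<^sub>R x \<in> closure S" unfolding closure_sequential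
    using assms subspace_scale tendsto_scaleR tendsto_const by (intro exI[of _ "\<lambda>n. c *\<^sub>R X n"]) blast
qed

lemma norm_midpoint_sq:
  fixes a b :: "'a::real_inner"
  shows "(norm ((1/2) *\<^sub>R (a + b)))\<^sup>2 = (norm a)\<^sup>2 / 2 + (norm b)\<^sup>2 / 2 - (norm (a - b))\<^sup>2 / 4"
  by (simp add: power2_norm_eq_inner inner_add_left inner_add_right inner_diff_left inner_diff_right
      inner_commute field_simps)

lemma norm_add_scaleR_sq:
  fixes q v :: "'a::real_inner"
  shows "(norm (q + t *\<^sub>R v))\<^sup>2 = (norm q)\<^sup>2 + 2 * t * (q \<bullet> v) + t\<^sup>2 * (norm v)\<^sup>2"
  unfolding power2_norm_eq_inner
  by (simp add: inner_add_left inner_add_right inner_commute algebra_simps power2_eq_square)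

lemma representer_if_quadratic_minimizer:
  fixes M :: "'a::real_inner set"
  assumes M: "subspace M" and q: "q \<in> M"
    and add: "\<And>x y. x \<in> M \<Longrightarrow> y \<in> M \<Longrightarrow> L (x + y) = L x + L y"
    and scale: "\<And>c x. x \<in> M \<Longrightarrow> L (c *\<^sub>R x) = c * L x"
    and min: "\<And>w. w \<in> M \<Longrightarrow> (norm q)\<^sup>2 / 2 - L q \<le> (norm w)\<^sup>2 / 2 - L w"
    and v: "v \<in> M"
  shows "L v = q \<bullet> v"
proof -
  have "0 \<le> t * (q \<bullet> v - L v) + t\<^sup>2 * (norm v)\<^sup>2 / 2" for t
  proof -
    have "t *\<^sub>R v \<in> M" "q + t *\<^sub>R v \<in> M" using M q v subspace_add subspace_scale by blast+
    then have "L (q + t *\<^sub>R v) = L q + t * L v" using add[OF q] scale[OF v] by simp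
    then show ?thesis using min[OF \<open>q + t *\<^sub>R v \<in> M\<close>] norm_add_scaleR_sq[of q t v]
      by (simp add: algebra_simps)
  qed
  from linear_coeff_zero_if_quadratic_nonneg[OF this] show ?thesis by simp
qed

lemma bounded_additive_tendsto:
  fixes M :: "'a::real_normed_vector set"
  assumes M: "subspace M"
    and add: "\<And>x y. x \<in> M \<Longrightarrow> y \<in> M \<Longrightarrow> L (x + y) = L x + L y"
    and scale: "\<And>c x. x \<in> M \<Longrightarrow> L (c *\<^sub>R x) = c * L x"
    and bounded: "\<And>x. x \<in> M \<Longrightarrow> \<bar>L x\<bar> \<le> K * norm x"
    and W: "\<And>n. W n \<in> M" and q: "q \<in> M" and Wq: "W \<longlonglongrightarrow> q"
  shows "(\<lambda>n. L (W n)) \<longlonglongrightarrow> L q"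
proof -
  have diff: "L (x - y) = L x - L y" if "x \<in> M" "y \<in> M" for x y
  proof -
    have "(-1) *\<^sub>R y \<in> M" using M that(2) by (rule subspace_scale)
    then have "L (x + (-1) *\<^sub>R y) = L x + L ((-1) *\<^sub>R y)" using add[OF that(1)] by blast
    then show ?thesis using scale[OF that(2), of "-1"] by simp
  qed
  have "(\<lambda>n. L (W n) - L q) \<longlonglongrightarrow> 0"
  proof (rule Lim_null_comparison)
    have "norm (L (W n) - L q) \<le> \<bar>K\<bar> * norm (W n - q)" for n
    proof -
      have "W n - q \<in> M" using M W q subspace_diff by blast
      then have "\<bar>L (W n - q)\<bar> \<le> K * norm (W n - q)" by (rule bounded)
      also have "\<dots> \<le> \<bar>K\<bar> * norm (W n - q)" by (intro mult_right_mono) auto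
      finally show ?thesis using diff[OF W q] by simp
    qed
    then show "\<forall>\<^sub>F n in sequentially. norm (L (W n) - L q) \<le> \<bar>K\<bar> * norm (W n - q)"
      by (intro always_eventually allI)
    show "(\<lambda>n. \<bar>K\<bar> * norm (W n - q)) \<longlonglongrightarrow> 0"
      using tendsto_norm_zero[OF LIM_zero[OF Wq]] by (rule tendsto_mult_right_zero)
  qed
  then show ?thesis by (rule LIM_zero_cancel)
qed

lemma bounded_linear_quadratic_minimizer_exists:
  fixes M :: "'a::{real_inner,complete_space} set"
  assumes M: "subspace M" "closed M"
    and add: "\<And>x y. x \<in> M \<Longrightarrow> y \<in> M \<Longrightarrow> L (x + y) = L x + L y"
    and scale: "\<And>c x. x \<in> M \<Longrightarrow> L (c *\<^sub>R x) = c * L x"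
    and bounded: "\<And>x. x \<in> M \<Longrightarrow> \<bar>L x\<bar> \<le> K * norm x"
  shows "\<exists>q\<in>M. \<forall>w\<in>M. (norm q)\<^sup>2 / 2 - L q \<le> (norm w)\<^sup>2 / 2 - L w"
proof -
  define \<phi> where "\<phi> w = (norm w)\<^sup>2 / 2 - L w" for w
  have "- K\<^sup>2 / 2 \<le> \<phi> w" if "w \<in> M" for w
  proof -
    have "K * norm w \<le> \<bar>K\<bar> * norm w" by (intro mult_right_mono) auto
    then have "L w \<le> \<bar>K\<bar> * norm w" using bounded[OF that] by linarith
    moreover have "0 \<le> (norm w - \<bar>K\<bar>)\<^sup>2 / 2" by simp
    ultimately show ?thesis unfolding \<phi>_def by (simp add: power2_diff power2_abs algebra_simps)
  qed
  then have bdd: "bdd_below (\<phi> ` M)" by (intro bdd_belowI2)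
  have mid: "\<exists>c\<in>M. \<phi> c \<le> (\<phi> a + \<phi> b) / 2 - (norm (a - b))\<^sup>2 / 8" if "a \<in> M" "b \<in> M" for a b
  proof (intro bexI)
    show "(1/2) *\<^sub>R (a + b) \<in> M" using M that subspace_add subspace_scale by blast
    have "L ((1/2) *\<^sub>R (a + b)) = (L a + L b) / 2"
      using add[OF that] scale[of "a + b" "1/2"] M that subspace_add by fastforce
    then show "\<phi> ((1/2) *\<^sub>R (a + b)) \<le> (\<phi> a + \<phi> b) / 2 - (norm (a - b))\<^sup>2 / 8"
      unfolding \<phi>_def norm_midpoint_sq by (simp add: field_simps)
  qed
  have "M \<noteq> {}" using subspace_0[OF M(1)] by blast
  then obtain W where W: "\<And>n. W n \<in> M" "\<And>n. \<phi> (W n) < Inf (\<phi> ` M) + 1 / Suc n"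
      "\<And>n k. (norm (W n - W k))\<^sup>2 \<le> 4 * (1 / Suc n + 1 / Suc k)"
    using midpoint_convex_minimizing_seq[OF _ bdd mid] by blast
  obtain q where Wq: "W \<longlonglongrightarrow> q"
    using Cauchy_if_sq_dist_bound[OF W(3)] unfolding Cauchy_convergent_iff convergent_def by blast
  have q: "q \<in> M" using closed_sequentially[OF M(2)] W(1) Wq by blast
  have "(\<lambda>n. L (W n)) \<longlonglongrightarrow> L q"
    by (rule bounded_additive_tendsto[where W=W, OF M(1) add scale bounded W(1) q Wq])
  then have "(\<lambda>n. \<phi> (W n)) \<longlonglongrightarrow> \<phi> q" unfolding \<phi>_def by (intro tendsto_intros Wq) auto
  moreover have "(\<lambda>n. Inf (\<phi> ` M) + 1 / Suc n) \<longlonglongrightarrow> Inf (\<phi> ` M)"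
    using tendsto_add[OF tendsto_const LIMSEQ_Suc[OF lim_inverse_n']] by simp
  ultimately have "\<phi> q \<le> Inf (\<phi> ` M)"
    by (rule LIMSEQ_le) (use W(2) in \<open>auto intro: less_imp_le\<close>)
  moreover have "Inf (\<phi> ` M) \<le> \<phi> w" if "w \<in> M" for w using cInf_lower[OF _ bdd] that by blast
  ultimately have "\<phi> q \<le> \<phi> w" if "w \<in> M" for w using that by (meson order_trans)
  then show ?thesis using q unfolding \<phi>_def by blast
qed

lemma riesz_representation_closed_subspace:
  fixes M :: "'a::{real_inner,complete_space} set"
  assumes M: "subspace M" "closed M"
    and add: "\<And>x y. x \<in> M \<Longrightarrow> y \<in> M \<Longrightarrow> L (x + y) = L x + L y"
    and scale: "\<And>c x. x \<in> M \<Longrightarrow> L (c *\<^sub>R x) = c * L x"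
    and bounded: "\<And>x. x \<in> M \<Longrightarrow> \<bar>L x\<bar> \<le> K * norm x"
  shows "\<exists>q\<in>M. \<forall>v\<in>M. L v = q \<bullet> v"
proof -
  obtain q where q: "q \<in> M" "\<And>w. w \<in> M \<Longrightarrow> (norm q)\<^sup>2 / 2 - L q \<le> (norm w)\<^sup>2 / 2 - L w"
    using bounded_linear_quadratic_minimizer_exists[OF assms] by blast
  then show ?thesis using representer_if_quadratic_minimizer[OF M(1) q(1) add scale] by blast
qed

lemma bounded_seq_subseq_inner_convergent:
  fixes u v :: "nat \<Rightarrow> 'a::real_inner"
  assumes bnd: "\<And>n. norm (u n) \<le> K"
  shows "\<exists>r. strict_mono r \<and> (\<forall>j. convergent (\<lambda>k. u (r k) \<bullet> v j))"
proof -
  define P where "P j s \<longleftrightarrow> convergent (\<lambda>k. u (s k) \<bullet> v j)" for j and s :: "nat \<Rightarrow> nat"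
  interpret subseqs P
  proof
    fix j and s :: "nat \<Rightarrow> nat" assume "strict_mono s"
    have "\<bar>u (s k) \<bullet> v j\<bar> \<le> K * norm (v j)" for k
      using Cauchy_Schwarz_ineq2[of "u (s k)" "v j"] mult_right_mono[OF bnd[of "s k"] norm_ge_zero[of "v j"]]
      by linarith
    then have "bounded (range (\<lambda>k. u (s k) \<bullet> v j))" by (intro boundedI) auto
    then obtain l r where "strict_mono r" "((\<lambda>k. u (s k) \<bullet> v j) \<circ> r) \<longlonglongrightarrow> l"
      using bounded_imp_convergent_subsequence[of "\<lambda>k. u (s k) \<bullet> v j"] by blast
    then show "\<exists>r. strict_mono r \<and> P j (s \<circ> r)" unfolding P_def by (auto simp: o_def convergent_def)
  qed
  have "convergent (\<lambda>k. u (diagseq (k + Suc j)) \<bullet> v j)" for j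
  proof -
    have "P j (diagseq \<circ> (+) (Suc j))"
    proof (rule diagseq_holds)
      fix r s n assume "strict_mono (r :: nat \<Rightarrow> nat)" "P n s"
      then show "P n (s \<circ> r)"
        unfolding P_def using convergent_subseq_convergent[of "\<lambda>k. u (s k) \<bullet> v n" r] by (simp add: o_def)
    qed
    then show ?thesis unfolding P_def o_def by (simp only: add.commute)
  qed
  then have "convergent (\<lambda>k. u (diagseq k) \<bullet> v j)" for j
    by (rule convergent_ignore_initial_segment[THEN iffD1])
  then show ?thesis using subseq_diagseq by blast
qed

lemma inner_convergent_on_span:
  fixes w :: "nat \<Rightarrow> 'a::real_inner"
  assumes conv: "\<And>v. v \<in> V \<Longrightarrow> convergent (\<lambda>k. w k \<bullet> v)" and v: "v \<in> span V"
  shows "convergent (\<lambda>k. w k \<bullet> v)"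
  using v
proof (induct rule: span_induct)
  case base
  have "convergent (\<lambda>k. w k \<bullet> (c *\<^sub>R x))" if "convergent (\<lambda>k. w k \<bullet> x)" for c x
    using convergent_mult_const_iff[of c] that by (cases "c = 0") (auto simp: convergent_const)
  moreover have "convergent (\<lambda>k. w k \<bullet> (x + y))"
    if "convergent (\<lambda>k. w k \<bullet> x)" "convergent (\<lambda>k. w k \<bullet> y)" for x y
    using convergent_add[OF that] by (simp add: inner_add_right)
  ultimately show ?case unfolding subspace_def by (auto simp: convergent_const)
qed (use conv in blast)

lemma inner_convergent_on_closure:
  fixes w :: "nat \<Rightarrow> 'a::real_inner"
  assumes bnd: "\<And>k. norm (w k) \<le> K"
    and conv: "\<And>v. v \<in> S \<Longrightarrow> convergent (\<lambda>k. w k \<bullet> v)" and v: "v \<in> closure S"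
  shows "convergent (\<lambda>k. w k \<bullet> v)"
proof -
  have "Cauchy (\<lambda>k. w k \<bullet> v)"
  proof (rule CauchyI)
    fix e :: real assume e: "0 < e"
    define e' where "e' = e / (3 * (\<bar>K\<bar> + 1))"
    have e': "0 < e'" unfolding e'_def using e by (simp add: add_pos_nonneg)
    obtain s where s: "s \<in> S" "dist s v < e'" using v e' unfolding closure_approachable by blast
    obtain N where N: "\<forall>a\<ge>N. \<forall>b\<ge>N. norm (w a \<bullet> s - w b \<bullet> s) < e / 3"
      using conv[OF s(1)] e CauchyD[of "\<lambda>k. w k \<bullet> s" "e / 3"] Cauchy_convergent_iff by auto
    have close: "\<bar>w k \<bullet> v - w k \<bullet> s\<bar> < e / 3" for k
    proof -
      have "\<bar>w k \<bullet> v - w k \<bullet> s\<bar> \<le> norm (w k) * norm (v - s)"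
        using Cauchy_Schwarz_ineq2[of "w k" "v - s"] by (simp add: inner_diff_right)
      also have "\<dots> \<le> \<bar>K\<bar> * e'"
        using bnd[of k] s(2) by (intro mult_mono) (auto simp: dist_norm norm_minus_commute)
      also have "\<dots> < e / 3" unfolding e'_def using e by (simp add: field_simps)
      finally show ?thesis .
    qed
    show "\<exists>N. \<forall>a\<ge>N. \<forall>b\<ge>N. norm (w a \<bullet> v - w b \<bullet> v) < e"
    proof (intro exI allI impI)
      fix a b assume "N \<le> a" "N \<le> b"
      then have "\<bar>w a \<bullet> s - w b \<bullet> s\<bar> < e / 3" using N by auto
      with close[of a] close[of b] show "norm (w a \<bullet> v - w b \<bullet> v) < e" unfolding real_norm_def by linarith
    qed
  qed
  then show ?thesis using Cauchy_convergent_iff by blast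
qed

text \<open>Inner products against an arbitrary vector reduce to the subspace by representing
  \<open>x \<mapsto> v \<bullet> x\<close> on it.\<close>

lemma weak_conv_if_inner_tendsto_on_subspace:
  fixes w :: "nat \<Rightarrow> 'a::{real_inner,complete_space}"
  assumes M: "subspace M" "closed M" and w: "\<And>k. w k \<in> M" and q: "q \<in> M"
    and lim: "\<And>v. v \<in> M \<Longrightarrow> (\<lambda>k. w k \<bullet> v) \<longlonglongrightarrow> q \<bullet> v"
  shows "weak_conv w q"
  unfolding weak_conv_def
proof
  fix v :: 'a
  have "\<bar>v \<bullet> x\<bar> \<le> norm v * norm x" for x by (rule Cauchy_Schwarz_ineq2)
  moreover have "v \<bullet> (x + y) = v \<bullet> x + v \<bullet> y" "v \<bullet> (c *\<^sub>R x) = c * (v \<bullet> x)" for x y c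
    by (simp_all add: inner_add_right)
  ultimately obtain pv where pv: "pv \<in> M" "\<And>x. x \<in> M \<Longrightarrow> v \<bullet> x = pv \<bullet> x"
    using riesz_representation_closed_subspace[OF M, where L="\<lambda>x. v \<bullet> x" and K="norm v"] by blast
  have "w k \<bullet> pv = w k \<bullet> v" for k using pv(2)[OF w] by (simp add: inner_commute)
  moreover have "q \<bullet> pv = q \<bullet> v" using pv(2)[OF q] by (simp add: inner_commute)
  ultimately show "(\<lambda>k. w k \<bullet> v) \<longlonglongrightarrow> q \<bullet> v" using lim[OF pv(1)] by simp
qed

lemma weak_conv_if_inner_convergent_on_subspace:
  fixes w :: "nat \<Rightarrow> 'a::{real_inner,complete_space}"
  assumes M: "subspace M" "closed M" and w: "\<And>k. w k \<in> M" and bnd: "\<And>k. norm (w k) \<le> K"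
    and conv: "\<And>v. v \<in> M \<Longrightarrow> convergent (\<lambda>k. w k \<bullet> v)"
  shows "\<exists>q\<in>M. weak_conv w q"
proof -
  define L where "L v = lim (\<lambda>k. w k \<bullet> v)" for v
  have L: "(\<lambda>k. w k \<bullet> v) \<longlonglongrightarrow> L v" if "v \<in> M" for v
    unfolding L_def using conv[OF that] convergent_LIMSEQ_iff by blast
  have bnd_L: "\<bar>L v\<bar> \<le> \<bar>K\<bar> * norm v" if "v \<in> M" for v
  proof (rule LIMSEQ_le_const2[OF tendsto_rabs[OF L[OF that]]])
    have "\<bar>w k \<bullet> v\<bar> \<le> \<bar>K\<bar> * norm v" for k
      using Cauchy_Schwarz_ineq2[of "w k" v] mult_right_mono[OF bnd[of k] norm_ge_zero[of v]]
        mult_right_mono[OF abs_ge_self[of K] norm_ge_zero[of v]] by linarith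
    then show "\<exists>N. \<forall>k\<ge>N. \<bar>w k \<bullet> v\<bar> \<le> \<bar>K\<bar> * norm v" by blast
  qed
  have L_add: "L (x + y) = L x + L y" if "x \<in> M" "y \<in> M" for x y
  proof (rule LIMSEQ_unique)
    show "(\<lambda>k. w k \<bullet> (x + y)) \<longlonglongrightarrow> L (x + y)" using L M that subspace_add by blast
    show "(\<lambda>k. w k \<bullet> (x + y)) \<longlonglongrightarrow> L x + L y" unfolding inner_add_right using that by (intro tendsto_add L)
  qed
  have L_scale: "L (c *\<^sub>R x) = c * L x" if "x \<in> M" for c x
  proof (rule LIMSEQ_unique)
    show "(\<lambda>k. w k \<bullet> (c *\<^sub>R x)) \<longlonglongrightarrow> L (c *\<^sub>R x)" using L M that subspace_scale by blast
    show "(\<lambda>k. w k \<bullet> (c *\<^sub>R x)) \<longlonglongrightarrow> c * L x" unfolding inner_scaleR_right using that by (intro tendsto_mult_left L)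
  qed
  obtain q where q: "q \<in> M" "\<And>v. v \<in> M \<Longrightarrow> L v = q \<bullet> v"
    using riesz_representation_closed_subspace[OF M L_add L_scale bnd_L] by blast
  have "weak_conv w q" using weak_conv_if_inner_tendsto_on_subspace[where w=w, OF M w q(1)] L q(2) by simp
  with q(1) show ?thesis by blast
qed

lemma bounded_seq_weak_conv_subseq:
  fixes u :: "nat \<Rightarrow> 'a::{real_inner,complete_space}"
  assumes bnd: "\<And>n. norm (u n) \<le> K"
  shows "\<exists>r q. strict_mono r \<and> q \<in> closure (span (range u)) \<and> weak_conv (\<lambda>k. u (r k)) q"
proof -
  obtain r where r: "strict_mono r" and conv_u: "\<And>j. convergent (\<lambda>k. u (r k) \<bullet> u j)"
    using bounded_seq_subseq_inner_convergent[where u=u and v=u, OF bnd] by blast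
  define M where "M = closure (span (range u))"
  have M: "subspace M" "closed M" unfolding M_def by (simp_all add: subspace_closure subspace_span)
  have uM: "u (r k) \<in> M" for k
    using closure_subset[of "span (range u)"] span_base[of "u (r k)" "range u"] unfolding M_def by blast
  have conv_span: "convergent (\<lambda>k. u (r k) \<bullet> v)" if "v \<in> span (range u)" for v
    using inner_convergent_on_span[where w="\<lambda>k. u (r k)" and V="range u"] conv_u that by blast
  have "convergent (\<lambda>k. u (r k) \<bullet> v)" if "v \<in> M" for v
    using inner_convergent_on_closure[where w="\<lambda>k. u (r k)" and S="span (range u)" and K=K]
      bnd conv_span that unfolding M_def by blast
  then obtain q where "q \<in> M" "weak_conv (\<lambda>k. u (r k)) q"
    using weak_conv_if_inner_convergent_on_subspace[where w="\<lambda>k. u (r k)", OF M uM bnd] by blast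
  with r show ?thesis unfolding M_def by blast
qed

lemma weak_conv_subseq: "weak_conv u q \<Longrightarrow> strict_mono r \<Longrightarrow> weak_conv (\<lambda>n. u (r n)) q"
  unfolding weak_conv_def using LIMSEQ_subseq_LIMSEQ by (fastforce simp: o_def)

lemma weak_conv_if_norm_diff_tendsto_zero:
  fixes u w :: "nat \<Rightarrow> 'a::real_inner"
  assumes u: "weak_conv u q" and diff: "(\<lambda>n. norm (u n - w n)) \<longlonglongrightarrow> 0"
  shows "weak_conv w q"
  unfolding weak_conv_def
proof
  fix v :: 'a
  have "(\<lambda>n. u n \<bullet> v - w n \<bullet> v) \<longlonglongrightarrow> 0"
  proof (rule Lim_null_comparison)
    have "norm (u n \<bullet> v - w n \<bullet> v) \<le> norm (u n - w n) * norm v" for n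
      using Cauchy_Schwarz_ineq2[of "u n - w n" v] by (simp add: inner_diff_left)
    then show "\<forall>\<^sub>F n in sequentially. norm (u n \<bullet> v - w n \<bullet> v) \<le> norm (u n - w n) * norm v"
      by (intro always_eventually allI)
    show "(\<lambda>n. norm (u n - w n) * norm v) \<longlonglongrightarrow> 0" by (rule tendsto_mult_left_zero[OF diff])
  qed
  from tendsto_diff[OF u[unfolded weak_conv_def, rule_format, of v] this] show "(\<lambda>n. w n \<bullet> v) \<longlonglongrightarrow> q \<bullet> v"
    by simp
qed

lemma convex_on_subspace_gradient_ineq:
  fixes h :: "'a::real_inner \<Rightarrow> real"
  assumes convex: "convex_on S h" and S: "subspace S" and x0: "x0 \<in> S" and v: "v \<in> S"
    and deriv: "(h has_derivative (\<lambda>d. G0 \<bullet> d)) (at x0 within S)"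
  shows "h x0 + G0 \<bullet> (v - x0) \<le> h v"
proof -
  define line where "line t = x0 + t *\<^sub>R (v - x0)" for t :: real
  have line_in: "line t \<in> S" for t unfolding line_def using S x0 v by (intro subspace_add subspace_scale subspace_diff)
  have "convex_on UNIV (h \<circ> line)"
  proof (rule convex_onI)
    fix t a b :: real assume t: "0 < t" "t < 1"
    have "line ((1 - t) *\<^sub>R a + t *\<^sub>R b) = (1 - t) *\<^sub>R line a + t *\<^sub>R line b" unfolding line_def by (simp add: algebra_simps)
    then show "(h \<circ> line) ((1 - t) *\<^sub>R a + t *\<^sub>R b) \<le> (1 - t) * (h \<circ> line) a + t * (h \<circ> line) b"
      using convex_onD[OF convex, of t "line a" "line b"] line_in t by simp
  qed simp
  moreover have "((h \<circ> line) has_real_derivative G0 \<bullet> (v - x0)) (at 0)"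
  proof -
    have "(line has_derivative (\<lambda>t. t *\<^sub>R (v - x0))) (at 0)" unfolding line_def by (intro derivative_eq_intros) auto
    moreover have "(h has_derivative (\<lambda>d. G0 \<bullet> d)) (at (line 0) within range line)"
      using has_derivative_subset[OF deriv, of "range line"] line_in unfolding line_def by fastforce
    ultimately have "((\<lambda>t. h (line t)) has_derivative (\<lambda>t. G0 \<bullet> (t *\<^sub>R (v - x0)))) (at 0)"
      by (rule has_derivative_in_compose)
    then show ?thesis unfolding has_field_derivative_def o_def by (simp add: mult.commute[of _ "G0 \<bullet> (v - x0)"])
  qed
  ultimately have "G0 \<bullet> (v - x0) * (1 - 0) \<le> (h \<circ> line) 1 - (h \<circ> line) 0"
    by (intro convex_on_imp_above_tangent[where A=UNIV]) (auto simp: o_def)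
  then show ?thesis unfolding line_def by simp
qed

section \<open>The direct sum\<close>

definition pscale :: "real \<Rightarrow> (nat \<Rightarrow> 'a) \<Rightarrow> (nat \<Rightarrow> 'a::real_vector)" where
  "pscale c x = (\<lambda>i. c *\<^sub>R x i)"

definition pnorm :: "nat \<Rightarrow> (nat \<Rightarrow> 'a::real_inner) \<Rightarrow> real" where
  "pnorm m x = sqrt (pnormsq m x)"

lemma pscale_apply [simp]: "pscale c x i = c *\<^sub>R x i"
  by (simp add: pscale_def)

lemma pinner_commute: "pinner m x y = pinner m y x"
  by (simp add: pinner_def inner_commute)

lemma pinner_add_left: "pinner m (x + y) z = pinner m x z + pinner m y z"
  by (simp add: pinner_def inner_add_left sum.distrib)

lemma pinner_add_right: "pinner m z (x + y) = pinner m z x + pinner m z y"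
  by (simp add: pinner_def inner_add_right sum.distrib)

lemma pinner_diff_left: "pinner m (x - y) z = pinner m x z - pinner m y z"
  by (simp add: pinner_def inner_diff_left sum_subtractf)

lemma pinner_diff_right: "pinner m z (x - y) = pinner m z x - pinner m z y"
  by (simp add: pinner_def inner_diff_right sum_subtractf)

lemma pinner_pscale_left: "pinner m (pscale c x) z = c * pinner m x z"
  by (simp add: pinner_def sum_distrib_left)

lemma pinner_pscale_right: "pinner m z (pscale c x) = c * pinner m z x"
  by (simp add: pinner_def sum_distrib_left)

lemma pinner_minus_left: "pinner m (- x) z = - pinner m x z"
  by (simp add: pinner_def sum_negf)

lemma pinner_minus_right: "pinner m z (- x) = - pinner m z x"
  by (simp add: pinner_def sum_negf)

lemmas pinner_simps = pinner_add_left pinner_add_right pinner_diff_left pinner_diff_right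
  pinner_pscale_left pinner_pscale_right pinner_minus_left pinner_minus_right

lemma pnormsq_eq_pinner: "pnormsq m x = pinner m x x"
  by (simp add: pnormsq_def pinner_def power2_norm_eq_inner)

lemma pnormsq_nonneg: "0 \<le> pnormsq m x"
  by (simp add: pnormsq_def sum_nonneg)

lemma pnorm_nonneg: "0 \<le> pnorm m x"
  by (simp add: pnorm_def pnormsq_nonneg)

lemma pnorm_power2: "(pnorm m x)\<^sup>2 = pnormsq m x"
  by (simp add: pnorm_def pnormsq_nonneg)

lemma pnorm_le_iff_pnormsq_le: "pnorm m x \<le> pnorm m y \<longleftrightarrow> pnormsq m x \<le> pnormsq m y"
  by (simp add: pnorm_def pnormsq_nonneg)

lemma pnormsq_le_if_pnorm_le:
  "pnorm m u \<le> k * pnorm m v \<Longrightarrow> 0 \<le> k \<Longrightarrow> pnormsq m u \<le> k\<^sup>2 * pnormsq m v"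
  using power_mono[of "pnorm m u" "k * pnorm m v" 2] pnorm_nonneg[of m u]
  by (simp add: pnorm_power2 power_mult_distrib)

lemma pnorm_eq_L2_set: "pnorm m x = L2_set (\<lambda>i. norm (x i)) {1..m}"
  by (simp add: pnorm_def pnormsq_def L2_set_def)

lemma pnorm_cong: "(\<And>i. i \<in> {1..m} \<Longrightarrow> x i = x' i) \<Longrightarrow> pnorm m x = pnorm m x'"
  by (simp add: pnorm_def pnormsq_def)

lemma pinner_Cauchy_Schwarz: "\<bar>pinner m x y\<bar> \<le> pnorm m x * pnorm m y"
proof -
  have "\<bar>pinner m x y\<bar> \<le> (\<Sum>i\<in>{1..m}. \<bar>x i \<bullet> y i\<bar>)" unfolding pinner_def by (rule sum_abs)
  also have "\<dots> \<le> (\<Sum>i\<in>{1..m}. \<bar>norm (x i)\<bar> * \<bar>norm (y i)\<bar>)"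
    by (intro sum_mono) (simp add: Cauchy_Schwarz_ineq2)
  also have "\<dots> \<le> pnorm m x * pnorm m y" unfolding pnorm_eq_L2_set by (rule L2_set_mult_ineq)
  finally show ?thesis .
qed

lemma pinner_le_pnorm_mult: "pinner m x y \<le> pnorm m x * pnorm m y"
  using pinner_Cauchy_Schwarz[of m x y] by linarith

lemma pnorm_triangle: "pnorm m (x + y) \<le> pnorm m x + pnorm m y"
proof -
  have "pnorm m (x + y) \<le> L2_set (\<lambda>i. norm (x i) + norm (y i)) {1..m}"
    unfolding pnorm_eq_L2_set by (intro L2_set_mono) (auto simp: norm_triangle_ineq)
  also have "\<dots> \<le> pnorm m x + pnorm m y" unfolding pnorm_eq_L2_set by (rule L2_set_triangle_ineq)
  finally show ?thesis .
qed

lemma pnorm_minus_commute: "pnorm m (x - y) = pnorm m (y - x)"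
  unfolding pnorm_def pnormsq_def by (simp add: norm_minus_commute)

lemma pnorm_diff_triangle: "pnorm m (x - y) \<le> pnorm m x + pnorm m y"
proof -
  have "pnorm m (x - y) \<le> L2_set (\<lambda>i. norm (x i) + norm (y i)) {1..m}"
    unfolding pnorm_eq_L2_set by (intro L2_set_mono) (auto simp: norm_triangle_ineq4)
  also have "\<dots> \<le> pnorm m x + pnorm m y" unfolding pnorm_eq_L2_set by (rule L2_set_triangle_ineq)
  finally show ?thesis .
qed

lemma pnorm_pscale: "pnorm m (pscale c x) = \<bar>c\<bar> * pnorm m x"
  unfolding pnorm_def pnormsq_def
  by (simp add: power_mult_distrib sum_distrib_left[symmetric] real_sqrt_mult)

lemma norm_le_pnorm: "i \<in> {1..m} \<Longrightarrow> norm (x i) \<le> pnorm m x"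
  unfolding pnorm_eq_L2_set by (rule member_le_L2_set) auto

lemma pnorm_le_sum_norm: "pnorm m x \<le> (\<Sum>i\<in>{1..m}. norm (x i))"
  unfolding pnorm_eq_L2_set by (rule L2_set_le_sum) auto

lemma pnormsq_diff: "pnormsq m (x - y) = pnormsq m x - 2 * pinner m x y + pnormsq m y"
  unfolding pnormsq_eq_pinner by (simp add: pinner_simps pinner_commute[of m y x])

lemma pnormsq_pscale: "pnormsq m (pscale c x) = c\<^sup>2 * pnormsq m x"
  unfolding pnormsq_eq_pinner by (simp add: pinner_simps power2_eq_square)

lemma pnormsq_diff_pscale:
  "pnormsq m (x - pscale t y) = pnormsq m x - 2 * t * pinner m x y + t\<^sup>2 * pnormsq m y"
  unfolding pnormsq_diff pnormsq_pscale by (simp add: pinner_simps)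

lemma pnormsq_midpoint:
  "pnormsq m (z - (\<lambda>i. (1/2) *\<^sub>R x i + (1 - 1/2) *\<^sub>R y i))
    = pnormsq m (z - x) / 2 + pnormsq m (z - y) / 2 - pnormsq m (x - y) / 4"
proof -
  have "(norm (z i - ((1/2) *\<^sub>R x i + (1 - 1/2) *\<^sub>R y i)))\<^sup>2
      = (norm (z i - x i))\<^sup>2 / 2 + (norm (z i - y i))\<^sup>2 / 2 - (norm (x i - y i))\<^sup>2 / 4" for i
  proof -
    have "z i - ((1/2) *\<^sub>R x i + (1 - 1/2) *\<^sub>R y i) = (1/2) *\<^sub>R ((z i - x i) + (z i - y i))"
      by (simp add: algebra_simps scaleR_add_left[symmetric])
    moreover have "norm ((z i - x i) - (z i - y i)) = norm (x i - y i)" by (simp add: norm_minus_commute)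
    ultimately show ?thesis by (simp only: norm_midpoint_sq)
  qed
  then show ?thesis unfolding pnormsq_def by (simp add: sum.distrib sum_subtractf sum_divide_distrib)
qed

lemma PH_eqI: "x \<in> PH m H \<Longrightarrow> y \<in> PH m H \<Longrightarrow> pnorm m (x - y) = 0 \<Longrightarrow> x = y"
  unfolding PH_def pnorm_def pnormsq_def by (auto simp: fun_eq_iff sum_nonneg_eq_0_iff)

lemma PH_component: "x \<in> PH m H \<Longrightarrow> i \<in> {1..m} \<Longrightarrow> x i \<in> H i"
  by (simp add: PH_def)

context
  fixes m :: nat and H :: "nat \<Rightarrow> 'a::real_inner set"
  assumes subspaces: "\<forall>i\<in>{1..m}. subspace (H i)"
begin

lemma PH_add: "x \<in> PH m H \<Longrightarrow> y \<in> PH m H \<Longrightarrow> x + y \<in> PH m H"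
  using subspaces unfolding PH_def by (auto intro: subspace_add)

lemma PH_diff: "x \<in> PH m H \<Longrightarrow> y \<in> PH m H \<Longrightarrow> x - y \<in> PH m H"
  using subspaces unfolding PH_def by (auto intro: subspace_diff)

lemma PH_pscale: "x \<in> PH m H \<Longrightarrow> pscale c x \<in> PH m H"
  using subspaces unfolding PH_def by (auto intro: subspace_scale)

lemma PH_convex_comb:
  "x \<in> PH m H \<Longrightarrow> y \<in> PH m H \<Longrightarrow> (\<lambda>i. t *\<^sub>R x i + (1 - t) *\<^sub>R y i) \<in> PH m H"
  using PH_add[OF PH_pscale PH_pscale, of x y t "1 - t"] by (simp add: plus_fun_def pscale_def)

end

lemma pinner_tendsto_if_weak_conv:
  assumes "\<forall>i\<in>{1..m}. weak_conv (\<lambda>k. X k i) (x i)"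
  shows "(\<lambda>k. pinner m (X k) y) \<longlonglongrightarrow> pinner m x y"
  using assms unfolding pinner_def weak_conv_def by (intro tendsto_sum) auto

lemma PH_weak_conv_subseq_components:
  fixes X :: "nat \<Rightarrow> nat \<Rightarrow> 'a::{real_inner,complete_space}"
  assumes H: "\<forall>i\<in>{1..m}. subspace (H i) \<and> closed (H i)"
    and X: "\<And>k. X k \<in> PH m H" and bnd: "\<And>k. pnorm m (X k) \<le> K" and N: "N \<le> m"
  shows "\<exists>r x. strict_mono r \<and> (\<forall>i\<in>{1..N}. x i \<in> H i \<and> weak_conv (\<lambda>k. X (r k) i) (x i))"
  using N
proof (induction N)
  case 0
  show ?case by (rule exI[of _ id], rule exI[of _ "\<lambda>_. 0"]) (simp add: strict_mono_def)
next
  case (Suc N)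
  then obtain r x where r: "strict_mono r"
    and x: "\<forall>i\<in>{1..N}. x i \<in> H i \<and> weak_conv (\<lambda>k. X (r k) i) (x i)" by auto
  define j where "j = Suc N"
  have j: "j \<in> {1..m}" unfolding j_def using Suc.prems by simp
  define u where "u k = X (r k) j" for k
  have "norm (u k) \<le> K" for k unfolding u_def using norm_le_pnorm[OF j] bnd order_trans by blast
  then obtain r' q where r': "strict_mono r'" and q: "q \<in> closure (span (range u))"
    and u: "weak_conv (\<lambda>k. u (r' k)) q"
    using bounded_seq_weak_conv_subseq by blast
  have "range u \<subseteq> H j" unfolding u_def using X j PH_component by blast
  then have "closure (span (range u)) \<subseteq> H j"
    using H j by (intro closure_minimal span_minimal) auto
  then have "q \<in> H j" using q by blast
  moreover have "weak_conv (\<lambda>k. X (r (r' k)) i) (x i)" if "i \<in> {1..N}" for i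
    using weak_conv_subseq[OF _ r'] x that by blast
  ultimately have "\<forall>i\<in>{1..Suc N}. (x(j := q)) i \<in> H i \<and> weak_conv (\<lambda>k. X ((r \<circ> r') k) i) ((x(j := q)) i)"
    using x u unfolding u_def j_def by (auto simp: le_Suc_eq)
  then show ?case using strict_mono_o[OF r r'] by blast
qed

lemma PH_bounded_weak_conv_subseq:
  fixes X :: "nat \<Rightarrow> nat \<Rightarrow> 'a::{real_inner,complete_space}"
  assumes H: "\<forall>i\<in>{1..m}. subspace (H i) \<and> closed (H i)"
    and X: "\<And>k. X k \<in> PH m H" and bnd: "\<And>k. pnorm m (X k) \<le> K"
  shows "\<exists>r x. strict_mono r \<and> x \<in> PH m H \<and> (\<forall>i\<in>{1..m}. weak_conv (\<lambda>k. X (r k) i) (x i))"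
proof -
  obtain r x where r: "strict_mono r" and x: "\<forall>i\<in>{1..m}. x i \<in> H i \<and> weak_conv (\<lambda>k. X (r k) i) (x i)"
    using PH_weak_conv_subseq_components[where X=X, OF H X bnd order_refl] by blast
  define x' where "x' i = (if i \<in> {1..m} then x i else 0)" for i
  have "x' \<in> PH m H" unfolding PH_def x'_def using x by auto
  moreover have "\<forall>i\<in>{1..m}. weak_conv (\<lambda>k. X (r k) i) (x' i)" unfolding x'_def using x by simp
  ultimately show ?thesis using r by blast
qed

text \<open>\<open>pinner m (X n) (x1 - x2)\<close> converges, being affine in the two squared distances, and its
  limits along the two subsequences are \<open>pinner m x1 (x1 - x2)\<close> and \<open>pinner m x2 (x1 - x2)\<close>.\<close>

lemma weak_cluster_points_eq:
  fixes X :: "nat \<Rightarrow> nat \<Rightarrow> 'a::real_inner"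
  assumes x1: "x1 \<in> PH m H" and x2: "x2 \<in> PH m H"
    and conv1: "convergent (\<lambda>n. pnorm m (X n - x1))" and conv2: "convergent (\<lambda>n. pnorm m (X n - x2))"
    and r1: "strict_mono r1" and r2: "strict_mono r2"
    and w1: "\<forall>i\<in>{1..m}. weak_conv (\<lambda>k. X (r1 k) i) (x1 i)"
    and w2: "\<forall>i\<in>{1..m}. weak_conv (\<lambda>k. X (r2 k) i) (x2 i)"
  shows "x1 = x2"
proof -
  obtain L1 L2 where L1: "(\<lambda>n. pnorm m (X n - x1)) \<longlonglongrightarrow> L1" and L2: "(\<lambda>n. pnorm m (X n - x2)) \<longlonglongrightarrow> L2"
    using conv1 conv2 by (auto simp: convergent_def)
  define \<Phi> where "\<Phi> n = pinner m (X n) (x1 - x2)" for n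
  define L where "L = (L2\<^sup>2 - L1\<^sup>2 - pnormsq m x2 + pnormsq m x1) / 2"
  have "\<Phi> = (\<lambda>n. ((pnorm m (X n - x2))\<^sup>2 - (pnorm m (X n - x1))\<^sup>2 - pnormsq m x2 + pnormsq m x1) / 2)"
    unfolding \<Phi>_def pnorm_power2 pnormsq_diff by (simp add: pinner_simps fun_eq_iff)
  then have \<Phi>: "\<Phi> \<longlonglongrightarrow> L" unfolding L_def by (simp only:) (intro tendsto_intros L1 L2, simp)
  have "(\<lambda>k. \<Phi> (r1 k)) \<longlonglongrightarrow> L" "(\<lambda>k. \<Phi> (r2 k)) \<longlonglongrightarrow> L"
    using LIMSEQ_subseq_LIMSEQ[OF \<Phi> r1] LIMSEQ_subseq_LIMSEQ[OF \<Phi> r2] by (simp_all add: o_def)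
  then have "pinner m x1 (x1 - x2) = L" "pinner m x2 (x1 - x2) = L"
    using LIMSEQ_unique pinner_tendsto_if_weak_conv[OF w1] pinner_tendsto_if_weak_conv[OF w2]
    unfolding \<Phi>_def by blast+
  then have "pnormsq m (x1 - x2) = 0" unfolding pnormsq_eq_pinner by (simp add: pinner_diff_left)
  then show ?thesis using PH_eqI[OF x1 x2] by (simp add: pnorm_def)
qed

lemma opial_direct_sum:
  fixes X :: "nat \<Rightarrow> nat \<Rightarrow> 'a::{real_inner,complete_space}"
  assumes H: "\<forall>i\<in>{1..m}. subspace (H i) \<and> closed (H i)"
    and X: "\<And>n. X n \<in> PH m H" and w0: "w0 \<in> Z"
    and fejer: "\<And>w. w \<in> Z \<Longrightarrow> convergent (\<lambda>n. pnorm m (X n - w))"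
    and cluster: "\<And>r x. strict_mono r \<Longrightarrow> x \<in> PH m H \<Longrightarrow>
      \<forall>i\<in>{1..m}. weak_conv (\<lambda>k. X (r k) i) (x i) \<Longrightarrow> x \<in> Z"
  shows "\<exists>x\<in>Z. x \<in> PH m H \<and> (\<forall>i\<in>{1..m}. weak_conv (\<lambda>n. X n i) (x i))"
proof -
  obtain B where "\<forall>n. norm (pnorm m (X n - w0)) \<le> B"
    using convergent_imp_Bseq[OF fejer[OF w0]] by (auto simp: Bseq_def)
  then have B: "pnorm m (X n - w0) \<le> B" for n by (simp add: pnorm_nonneg)
  have bnd: "pnorm m (X (s n)) \<le> B + pnorm m w0" for s n
    using pnorm_triangle[of m "X (s n) - w0" w0] B[of "s n"] by simp
  obtain r0 x where r0: "strict_mono r0" and x: "x \<in> PH m H"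
    and wx: "\<forall>i\<in>{1..m}. weak_conv (\<lambda>k. X (r0 k) i) (x i)"
    using PH_bounded_weak_conv_subseq[where X=X and K="B + pnorm m w0", OF H X] bnd[of id] by auto
  have xZ: "x \<in> Z" using cluster[OF r0 x wx] .
  have "(\<lambda>n. X n i \<bullet> v) \<longlonglongrightarrow> x i \<bullet> v" if i: "i \<in> {1..m}" for i v
  proof (rule LIMSEQ_if_subseqs_have_LIMSEQ_subseq)
    fix s :: "nat \<Rightarrow> nat" assume s: "strict_mono s"
    obtain r y where r: "strict_mono r" and y: "y \<in> PH m H"
      and wy: "\<forall>i\<in>{1..m}. weak_conv (\<lambda>k. X (s (r k)) i) (y i)"
      using PH_bounded_weak_conv_subseq[where X="\<lambda>n. X (s n)", OF H X bnd[of s]] by blast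
    have sr: "strict_mono (s \<circ> r)" using strict_mono_o[OF s r] .
    then have "y \<in> Z" using cluster[OF _ y] wy by (simp add: o_def)
    then have "y = x"
      using weak_cluster_points_eq[OF y x fejer fejer[OF xZ] sr r0 _ wx] wy by (simp add: o_def)
    then show "\<exists>r. strict_mono r \<and> (\<lambda>k. X (s (r k)) i \<bullet> v) \<longlonglongrightarrow> x i \<bullet> v"
      using r wy i unfolding weak_conv_def by blast
  qed
  then show ?thesis using xZ x unfolding weak_conv_def by blast
qed

lemma PH_limit_if_sq_dist_bound:
  fixes W :: "nat \<Rightarrow> nat \<Rightarrow> 'a::{real_inner,complete_space}"
  assumes closed: "\<forall>i\<in>{1..m}. closed (H i)" and W: "\<And>n. W n \<in> PH m H"
    and bound: "\<And>n k. pnormsq m (W n - W k) \<le> 4 * (1 / Suc n + 1 / Suc k)"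
  shows "\<exists>q\<in>PH m H. \<forall>i\<in>{1..m}. (\<lambda>n. W n i) \<longlonglongrightarrow> q i"
proof -
  have "Cauchy (\<lambda>n. W n i)" if i: "i \<in> {1..m}" for i
  proof (rule Cauchy_if_sq_dist_bound)
    fix n k
    have "(norm (W n i - W k i))\<^sup>2 \<le> (pnorm m (W n - W k))\<^sup>2"
      using norm_le_pnorm[OF i, of "W n - W k"] by (intro power_mono) auto
    then show "(norm (W n i - W k i))\<^sup>2 \<le> 4 * (1 / Suc n + 1 / Suc k)"
      using bound[of n k] by (simp add: pnorm_power2)
  qed
  then have lim: "(\<lambda>n. W n i) \<longlonglongrightarrow> lim (\<lambda>n. W n i)" if "i \<in> {1..m}" for i
    using that Cauchy_convergent convergent_LIMSEQ_iff by blast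
  define q where "q i = (if i \<in> {1..m} then lim (\<lambda>n. W n i) else 0)" for i
  have Wq: "(\<lambda>n. W n i) \<longlonglongrightarrow> q i" if "i \<in> {1..m}" for i using lim that unfolding q_def by simp
  have "q i \<in> H i" if i: "i \<in> {1..m}" for i
  proof -
    have "closed (H i)" using closed i by blast
    then show ?thesis using closed_sequentially[where f="\<lambda>n. W n i"] Wq[OF i] PH_component[OF W i] by blast
  qed
  then have "q \<in> PH m H" unfolding PH_def q_def by auto
  then show ?thesis using Wq by blast
qed

lemma pnormsq_tendsto_if_components:
  assumes "\<forall>i\<in>{1..m}. (\<lambda>n. W n i) \<longlonglongrightarrow> q i"
  shows "(\<lambda>n. pnormsq m (y - W n)) \<longlonglongrightarrow> pnormsq m (y - q)"
proof -
  have "(\<lambda>n. \<Sum>i\<in>{1..m}. (norm (y i - W n i))\<^sup>2) \<longlonglongrightarrow> (\<Sum>i\<in>{1..m}. (norm (y i - q i))\<^sup>2)"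
    using assms by (intro tendsto_sum tendsto_power tendsto_norm tendsto_diff tendsto_const) auto
  then show ?thesis unfolding pnormsq_def by simp
qed

section \<open>The proximity operator\<close>

locale Gamma0_direct_sum =
  fixes m :: nat and H :: "nat \<Rightarrow> 'a::{real_inner,complete_space} set"
    and f :: "(nat \<Rightarrow> 'a) \<Rightarrow> ereal"
  assumes closed_subspaces: "\<forall>i\<in>{1..m}. subspace (H i) \<and> closed (H i)"
    and Gamma0: "Gamma0 m H f"
    and subdiff_nonempty: "\<exists>x u. u \<in> subdiff m H f x"
    \<comment> \<open>supplies the affine minorant that bounds the proximal objective from below\<close>
begin

definition f_real :: "(nat \<Rightarrow> 'a) \<Rightarrow> real" where
  "f_real w = real_of_ereal (f w)"

definition dom_f :: "(nat \<Rightarrow> 'a) set" where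
  "dom_f = {w \<in> PH m H. f w \<noteq> \<infinity>}"

definition prox_f :: "real \<Rightarrow> (nat \<Rightarrow> 'a) \<Rightarrow> nat \<Rightarrow> 'a" where
  "prox_f lam y = prox m H (\<lambda>w. ereal lam * f w) y"

definition prox_obj :: "real \<Rightarrow> (nat \<Rightarrow> 'a) \<Rightarrow> (nat \<Rightarrow> 'a) \<Rightarrow> real" where
  "prox_obj lam y w = lam * f_real w + pnormsq m (y - w) / 2"

lemma subspaces: "\<forall>i\<in>{1..m}. subspace (H i)"
  using closed_subspaces by blast

lemma f_eq_ereal_f_real: "w \<in> dom_f \<Longrightarrow> f w = ereal (f_real w)"
  using Gamma0 unfolding Gamma0_def proper_on_def dom_f_def f_real_def by (cases "f w") auto

lemma dom_f_nonempty: "dom_f \<noteq> {}"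
  using Gamma0 unfolding Gamma0_def proper_on_def dom_f_def by blast

lemma dom_f_PH: "w \<in> dom_f \<Longrightarrow> w \<in> PH m H"
  by (simp add: dom_f_def)

lemma dom_f_convex_comb:
  assumes a: "a \<in> dom_f" and b: "b \<in> dom_f" and t: "0 < t" "t < 1"
  shows "(\<lambda>i. t *\<^sub>R a i + (1 - t) *\<^sub>R b i) \<in> dom_f"
    and "f_real (\<lambda>i. t *\<^sub>R a i + (1 - t) *\<^sub>R b i) \<le> t * f_real a + (1 - t) * f_real b"
proof -
  let ?c = "\<lambda>i. t *\<^sub>R a i + (1 - t) *\<^sub>R b i"
  have c: "?c \<in> PH m H" using PH_convex_comb[OF subspaces] a b unfolding dom_f_def by blast
  have "f ?c \<le> ereal t * f a + ereal (1 - t) * f b"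
    using Gamma0 a b t unfolding Gamma0_def econvex_on_def dom_f_def by blast
  then have fc: "f ?c \<le> ereal (t * f_real a + (1 - t) * f_real b)"
    using f_eq_ereal_f_real[OF a] f_eq_ereal_f_real[OF b] by simp
  then show c_dom: "?c \<in> dom_f" using c unfolding dom_f_def by auto
  show "f_real ?c \<le> t * f_real a + (1 - t) * f_real b" using fc f_eq_ereal_f_real[OF c_dom] by simp
qed

lemma lsc_f_real:
  assumes W: "\<And>k. W k \<in> dom_f" and x: "x \<in> PH m H"
    and lim: "(\<lambda>k. pnormsq m (W k - x)) \<longlonglongrightarrow> 0"
    and bound: "\<And>k. f_real (W k) \<le> R k" and R: "R \<longlonglongrightarrow> r"
  shows "x \<in> dom_f" "f_real x \<le> r"
proof -
  have "f x \<le> liminf (\<lambda>k. f (W k))"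
    using Gamma0 W x lim unfolding Gamma0_def lsc_on_def dom_f_def by blast
  also have "\<dots> \<le> liminf (\<lambda>k. ereal (R k))"
    using f_eq_ereal_f_real[OF W] bound by (intro Liminf_mono always_eventually allI) simp
  also have "\<dots> = ereal r" by (intro lim_imp_Liminf trivial_limit_sequentially tendsto_ereal R)
  finally have fx: "f x \<le> ereal r" .
  then show x_dom: "x \<in> dom_f" using x unfolding dom_f_def by auto
  show "f_real x \<le> r" using fx f_eq_ereal_f_real[OF x_dom] by simp
qed

lemma subdiff_dom_f: "u \<in> subdiff m H f x \<Longrightarrow> x \<in> dom_f"
  unfolding subdiff_def dom_f_def by auto

lemma subdiff_inequality:
  assumes "u \<in> subdiff m H f x" "w \<in> dom_f"
  shows "f_real x + pinner m u (w - x) \<le> f_real w"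
proof -
  have "f x + ereal (pinner m u (w - x)) \<le> f w" using assms unfolding subdiff_def dom_f_def by blast
  then show ?thesis using f_eq_ereal_f_real[OF subdiff_dom_f[OF assms(1)]] f_eq_ereal_f_real[OF assms(2)] by simp
qed

lemma subdiffI:
  assumes x: "x \<in> dom_f" and u: "u \<in> PH m H" and ineq: "\<And>w. w \<in> dom_f \<Longrightarrow> f_real x + pinner m u (w - x) \<le> f_real w"
  shows "u \<in> subdiff m H f x"
proof -
  have "f x + ereal (pinner m u (w - x)) \<le> f w" if w: "w \<in> PH m H" for w
  proof (cases "f w = \<infinity>")
    case False
    then have "w \<in> dom_f" using w unfolding dom_f_def by blast
    then show ?thesis using ineq f_eq_ereal_f_real x by simp
  qed simp
  then show ?thesis using x u f_eq_ereal_f_real[OF x] unfolding subdiff_def dom_f_def by auto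
qed

lemma subdiff_monotone:
  assumes "u1 \<in> subdiff m H f x1" "u2 \<in> subdiff m H f x2"
  shows "0 \<le> pinner m (u1 - u2) (x1 - x2)"
proof -
  have "x1 \<in> dom_f" "x2 \<in> dom_f" using subdiff_dom_f assms by blast+
  then have "f_real x1 + pinner m u1 (x2 - x1) \<le> f_real x2" "f_real x2 + pinner m u2 (x1 - x2) \<le> f_real x1"
    using subdiff_inequality assms by blast+
  moreover have "pinner m (u1 - u2) (x1 - x2) = - pinner m u1 (x2 - x1) - pinner m u2 (x1 - x2)"
    by (simp add: pinner_simps)
  ultimately show ?thesis by linarith
qed

lemma prox_obj_bdd_below:
  assumes lam: "0 < lam"
  shows "bdd_below (prox_obj lam y ` dom_f)"
proof -
  obtain x0 u0 where u0: "u0 \<in> subdiff m H f x0" using subdiff_nonempty by blast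
  define C where "C = lam * f_real x0 + lam * pinner m u0 (y - x0)"
  have "C - (lam * pnorm m u0)\<^sup>2 / 2 \<le> prox_obj lam y w" if w: "w \<in> dom_f" for w
  proof -
    define s where "s = pnorm m (y - w)"
    have "f_real x0 + pinner m u0 (w - y) + pinner m u0 (y - x0) \<le> f_real w"
      using subdiff_inequality[OF u0 w] by (simp add: pinner_simps)
    then have A: "lam * f_real x0 + lam * pinner m u0 (w - y) + lam * pinner m u0 (y - x0) \<le> lam * f_real w"
      using mult_left_mono[OF _ less_imp_le[OF lam]] by (fastforce simp: distrib_left)
    have "\<bar>pinner m u0 (w - y)\<bar> \<le> pnorm m u0 * s"
      using pinner_Cauchy_Schwarz[of m u0 "w - y"] pnorm_minus_commute[of m w y] unfolding s_def by simp
    then have "lam * (- (pnorm m u0 * s)) \<le> lam * pinner m u0 (w - y)"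
      using lam by (intro mult_left_mono) (auto simp: abs_le_iff)
    then have B: "- (lam * pnorm m u0 * s) \<le> lam * pinner m u0 (w - y)" by simp
    have "(s - lam * pnorm m u0)\<^sup>2 = s\<^sup>2 - 2 * (lam * pnorm m u0 * s) + (lam * pnorm m u0)\<^sup>2"
      by (simp add: power2_diff algebra_simps)
    then have "0 \<le> s\<^sup>2 / 2 - lam * pnorm m u0 * s + (lam * pnorm m u0)\<^sup>2 / 2"
      using zero_le_power2[of "s - lam * pnorm m u0"] by linarith
    with A B show ?thesis
      unfolding prox_obj_def C_def s_def pnorm_power2 by linarith
  qed
  then show ?thesis by (intro bdd_belowI2)
qed

lemma prox_obj_midpoint:
  assumes lam: "0 < lam" and a: "a \<in> dom_f" and b: "b \<in> dom_f"
  shows "\<exists>c\<in>dom_f. prox_obj lam y c \<le> (prox_obj lam y a + prox_obj lam y b) / 2 - pnormsq m (a - b) / 8"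
proof
  let ?c = "\<lambda>i. (1/2) *\<^sub>R a i + (1 - 1/2) *\<^sub>R b i"
  show "?c \<in> dom_f" using dom_f_convex_comb(1)[OF a b, of "1/2"] by simp
  have "lam * f_real ?c \<le> lam * ((f_real a + f_real b) / 2)"
    using dom_f_convex_comb(2)[OF a b, of "1/2"] lam by simp
  then show "prox_obj lam y ?c \<le> (prox_obj lam y a + prox_obj lam y b) / 2 - pnormsq m (a - b) / 8"
    unfolding prox_obj_def pnormsq_midpoint by (simp add: field_simps)
qed

lemma prox_obj_minimizer_exists:
  assumes lam: "0 < lam"
  shows "\<exists>q\<in>dom_f. \<forall>w\<in>dom_f. prox_obj lam y q \<le> prox_obj lam y w"
proof -
  define d where "d = Inf (prox_obj lam y ` dom_f)"
  have d_le: "d \<le> prox_obj lam y w" if "w \<in> dom_f" for w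
    unfolding d_def using cInf_lower[OF _ prox_obj_bdd_below[OF lam]] that by blast
  obtain W where W: "\<And>n. W n \<in> dom_f" "\<And>n. prox_obj lam y (W n) < d + 1 / Suc n"
    "\<And>n k. pnormsq m (W n - W k) \<le> 4 * (1 / Suc n + 1 / Suc k)"
    using midpoint_convex_minimizing_seq[OF dom_f_nonempty prox_obj_bdd_below[OF lam] prox_obj_midpoint[OF lam]]
    unfolding d_def by blast
  obtain q where q: "q \<in> PH m H" and Wq: "\<forall>i\<in>{1..m}. (\<lambda>n. W n i) \<longlonglongrightarrow> q i"
    using PH_limit_if_sq_dist_bound[OF _ dom_f_PH[OF W(1)] W(3)] closed_subspaces by blast
  have "(\<lambda>n. pnormsq m (q - W n)) \<longlonglongrightarrow> pnormsq m (q - q)" by (rule pnormsq_tendsto_if_components[OF Wq])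
  then have W_to_q: "(\<lambda>n. pnormsq m (W n - q)) \<longlonglongrightarrow> 0"
    unfolding pnormsq_def by (simp add: norm_minus_commute)
  define R where "R n = (d + 1 / Suc n - pnormsq m (y - W n) / 2) / lam" for n
  have R_bound: "f_real (W n) \<le> R n" for n
  proof -
    have "lam * f_real (W n) \<le> d + 1 / Suc n - pnormsq m (y - W n) / 2"
      using W(2)[of n] unfolding prox_obj_def by linarith
    then show ?thesis unfolding R_def using lam by (simp add: pos_le_divide_eq mult.commute)
  qed
  have "R \<longlonglongrightarrow> (d + 0 - pnormsq m (y - q) / 2) / lam"
    unfolding R_def using lam
    by (intro tendsto_intros LIMSEQ_Suc[OF lim_inverse_n'] pnormsq_tendsto_if_components[OF Wq]) auto
  then have R_lim: "R \<longlonglongrightarrow> (d - pnormsq m (y - q) / 2) / lam" by simp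
  have "q \<in> dom_f" "f_real q \<le> (d - pnormsq m (y - q) / 2) / lam"
    using lsc_f_real[OF W(1) q W_to_q R_bound R_lim] by simp_all
  moreover from this(2) have "prox_obj lam y q \<le> d"
    unfolding prox_obj_def using lam by (simp add: pos_le_divide_eq mult.commute)
  ultimately show ?thesis using d_le order_trans by blast
qed

lemma prox_obj_minimizer_unique:
  assumes lam: "0 < lam" and q1: "q1 \<in> dom_f" and q2: "q2 \<in> dom_f"
    and min1: "\<forall>w\<in>dom_f. prox_obj lam y q1 \<le> prox_obj lam y w"
    and min2: "\<forall>w\<in>dom_f. prox_obj lam y q2 \<le> prox_obj lam y w"
  shows "q1 = q2"
proof -
  obtain c where "c \<in> dom_f"
    and c: "prox_obj lam y c \<le> (prox_obj lam y q1 + prox_obj lam y q2) / 2 - pnormsq m (q1 - q2) / 8"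
    using prox_obj_midpoint[OF lam q1 q2] by blast
  then have "prox_obj lam y q1 \<le> prox_obj lam y c" using min1 by blast
  moreover have "prox_obj lam y q1 \<le> prox_obj lam y q2" "prox_obj lam y q2 \<le> prox_obj lam y q1"
    using min1 min2 q1 q2 by blast+
  ultimately have "pnormsq m (q1 - q2) \<le> 0" using c by argo
  then have "pnorm m (q1 - q2) = 0" using pnormsq_nonneg[of m "q1 - q2"] by (simp add: pnorm_def)
  then show ?thesis using PH_eqI dom_f_PH q1 q2 by blast
qed

lemma prox_objective_ereal:
  assumes lam: "0 < lam" and w: "w \<in> PH m H"
  shows "ereal lam * f w + ereal (pnormsq m (y - w) / 2) = (if w \<in> dom_f then ereal (prox_obj lam y w) else \<infinity>)"
proof (cases "w \<in> dom_f")
  case True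
  then show ?thesis using f_eq_ereal_f_real by (simp add: prox_obj_def)
next
  case False
  then have "f w = \<infinity>" using w unfolding dom_f_def by blast
  then show ?thesis using lam False by simp
qed

lemma prox_f_minimizes:
  assumes lam: "0 < lam"
  shows "prox_f lam y \<in> dom_f" "\<forall>w\<in>dom_f. prox_obj lam y (prox_f lam y) \<le> prox_obj lam y w"
proof -
  let ?min = "\<lambda>z. z \<in> dom_f \<and> (\<forall>w\<in>dom_f. prox_obj lam y z \<le> prox_obj lam y w)"
  have iff: "(z \<in> PH m H \<and> (\<forall>w\<in>PH m H. ereal lam * f z + ereal (pnormsq m (y - z) / 2)
      \<le> ereal lam * f w + ereal (pnormsq m (y - w) / 2))) \<longleftrightarrow> ?min z" for z
  proof
    assume z: "z \<in> PH m H \<and> (\<forall>w\<in>PH m H. ereal lam * f z + ereal (pnormsq m (y - z) / 2)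
      \<le> ereal lam * f w + ereal (pnormsq m (y - w) / 2))"
    obtain w0 where "w0 \<in> dom_f" using dom_f_nonempty by blast
    then have z_dom: "z \<in> dom_f" using z[THEN conjunct2, rule_format, of w0]
      by (auto simp: prox_objective_ereal[OF lam] z dom_f_PH split: if_splits)
    have "prox_obj lam y z \<le> prox_obj lam y w" if "w \<in> dom_f" for w
      using z[THEN conjunct2, rule_format, of w] that z_dom dom_f_PH
      by (simp add: prox_objective_ereal[OF lam])
    with z_dom show "?min z" by blast
  next
    assume "?min z"
    then show "z \<in> PH m H \<and> (\<forall>w\<in>PH m H. ereal lam * f z + ereal (pnormsq m (y - z) / 2)
      \<le> ereal lam * f w + ereal (pnormsq m (y - w) / 2))"
      by (auto simp: prox_objective_ereal[OF lam] dom_f_PH)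
  qed
  obtain q where q: "?min q" using prox_obj_minimizer_exists[OF lam] by blast
  have "prox_f lam y = (THE z. ?min z)" unfolding prox_f_def prox_def iff ..
  also have "\<dots> = q"
    by (rule the_equality[where P="?min", OF q]) (use q prox_obj_minimizer_unique[OF lam] in blast)
  finally have "?min (prox_f lam y)" using q by simp
  then show "prox_f lam y \<in> dom_f" "\<forall>w\<in>dom_f. prox_obj lam y (prox_f lam y) \<le> prox_obj lam y w"
    by blast+
qed

text \<open>Compare the minimizer with the points of the segment towards \<open>w\<close>, and let them tend to it.\<close>

lemma prox_obj_minimizer_variational:
  assumes lam: "0 < lam" and p: "p \<in> dom_f" and min: "\<forall>w\<in>dom_f. prox_obj lam y p \<le> prox_obj lam y w"
    and w: "w \<in> dom_f"
  shows "lam * f_real p + pinner m (y - p) (w - p) \<le> lam * f_real w"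
proof (rule le_if_le_add_small_multiple)
  fix t :: real assume t: "0 < t" "t < 1"
  let ?c = "\<lambda>i. t *\<^sub>R w i + (1 - t) *\<^sub>R p i"
  have "y - ?c = (y - p) - pscale t (w - p)" by (simp add: fun_eq_iff algebra_simps)
  then have "pnormsq m (y - ?c) = pnormsq m (y - p) - 2 * t * pinner m (y - p) (w - p) + t\<^sup>2 * pnormsq m (w - p)"
    by (simp only: pnormsq_diff_pscale)
  moreover have "prox_obj lam y p \<le> prox_obj lam y ?c" using min dom_f_convex_comb(1)[OF w p t] by blast
  moreover have "lam * f_real ?c \<le> lam * (t * f_real w + (1 - t) * f_real p)"
    using dom_f_convex_comb(2)[OF w p t] lam by simp
  ultimately have "0 \<le> t * (lam * f_real w - lam * f_real p - pinner m (y - p) (w - p) + t * (pnormsq m (w - p) / 2))"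
    unfolding prox_obj_def by (simp add: algebra_simps power2_eq_square)
  then show "lam * f_real p + pinner m (y - p) (w - p) \<le> lam * f_real w + t * (pnormsq m (w - p) / 2)"
    using t by (simp add: zero_le_mult_iff)
qed (simp add: pnormsq_nonneg)

lemma prox_f_subdiff:
  assumes lam: "0 < lam" and y: "y \<in> PH m H"
  shows "pscale (1 / lam) (y - prox_f lam y) \<in> subdiff m H f (prox_f lam y)"
proof (rule subdiffI)
  let ?p = "prox_f lam y"
  show "?p \<in> dom_f" by (rule prox_f_minimizes(1)[OF lam])
  then show "pscale (1 / lam) (y - ?p) \<in> PH m H"
    using PH_pscale[OF subspaces PH_diff[OF subspaces y]] dom_f_PH by blast
  fix w assume "w \<in> dom_f"
  then have "lam * f_real ?p + pinner m (y - ?p) (w - ?p) \<le> lam * f_real w"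
    using prox_obj_minimizer_variational[OF lam \<open>?p \<in> dom_f\<close> prox_f_minimizes(2)[OF lam]] by blast
  then show "f_real ?p + pinner m (pscale (1 / lam) (y - ?p)) (w - ?p) \<le> f_real w"
    using lam by (simp add: pinner_pscale_left field_simps)
qed

lemma prox_f_PH: "0 < lam \<Longrightarrow> prox_f lam y \<in> PH m H"
  using prox_f_minimizes(1) dom_f_PH by blast

lemma prox_f_nonexpansive:
  assumes lam: "0 < lam" and y1: "y1 \<in> PH m H" and y2: "y2 \<in> PH m H"
  shows "pnorm m (prox_f lam y1 - prox_f lam y2) \<le> pnorm m (y1 - y2)"
proof -
  let ?p1 = "prox_f lam y1" and ?p2 = "prox_f lam y2"
  have "0 \<le> pinner m (pscale (1 / lam) (y1 - ?p1) - pscale (1 / lam) (y2 - ?p2)) (?p1 - ?p2)"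
    by (rule subdiff_monotone[OF prox_f_subdiff[OF lam y1] prox_f_subdiff[OF lam y2]])
  also have "\<dots> = (1 / lam) * (pinner m (y1 - y2) (?p1 - ?p2) - pinner m (?p1 - ?p2) (?p1 - ?p2))"
    by (simp add: pinner_simps algebra_simps)
  finally have "(pnorm m (?p1 - ?p2))\<^sup>2 \<le> pinner m (y1 - y2) (?p1 - ?p2)"
    using lam by (simp add: zero_le_divide_iff pnorm_power2 pnormsq_eq_pinner)
  also have "\<dots> \<le> pnorm m (y1 - y2) * pnorm m (?p1 - ?p2)" by (rule pinner_le_pnorm_mult)
  finally show ?thesis
    using pnorm_nonneg[of m "?p1 - ?p2"] pnorm_nonneg[of m "y1 - y2"]
    by (cases "pnorm m (?p1 - ?p2) = 0") (auto simp: power2_eq_square mult_le_cancel_right)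
qed

end

section \<open>Forward-backward-forward splitting\<close>

definition grad_op :: "nat \<Rightarrow> (nat \<Rightarrow> (nat \<Rightarrow> 'a) \<Rightarrow> 'a) \<Rightarrow> (nat \<Rightarrow> 'a) \<Rightarrow> nat \<Rightarrow> 'a::zero" where
  "grad_op m G x = (\<lambda>i. if i \<in> {1..m} then G i x else 0)"

lemma solves_P_if_zero:
  fixes xb :: "nat \<Rightarrow> 'a::real_inner"
  assumes H: "\<forall>i\<in>{1..m}. subspace (H i)" and xb: "xb \<in> PH m H"
    and zero: "- grad_op m G xb \<in> subdiff m H f xb"
    and convex: "\<forall>i\<in>{1..m}. convex_on (H i) (\<lambda>v. g i (xb(i := v)))"
    and deriv: "\<forall>i\<in>{1..m}. ((\<lambda>v. g i (xb(i := v))) has_derivative (\<lambda>h. G i xb \<bullet> h)) (at (xb i) within H i)"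
  shows "solves_P m H f g xb"
  unfolding solves_P_def
proof (intro conjI xb ballI)
  fix i v assume i: "i \<in> {1..m}" and v: "v \<in> H i"
  have "xb(i := v) \<in> PH m H" using xb i v unfolding PH_def by auto
  then have sub: "f xb + ereal (pinner m (- grad_op m G xb) (xb(i := v) - xb)) \<le> f (xb(i := v))"
    using zero unfolding subdiff_def by blast
  have "pinner m (- grad_op m G xb) (xb(i := v) - xb) = (\<Sum>j\<in>{1..m}. if j = i then - (G i xb \<bullet> (v - xb i)) else 0)"
    unfolding pinner_def grad_op_def by (rule sum.cong) auto
  then have "pinner m (- grad_op m G xb) (xb(i := v) - xb) = - (G i xb \<bullet> (v - xb i))" using i by simp
  moreover have "g i xb + G i xb \<bullet> (v - xb i) \<le> g i (xb(i := v))"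
    using convex_on_subspace_gradient_ineq[of "H i" "\<lambda>v. g i (xb(i := v))" "xb i" v "G i xb"]
      convex deriv H i v PH_component[OF xb i] by simp
  moreover have "f xb \<noteq> \<infinity>" "f xb \<noteq> -\<infinity>" using zero unfolding subdiff_def by auto
  ultimately show "f xb + ereal (g i xb) \<le> f (xb(i := v)) + ereal (g i (xb(i := v)))"
    using sub by (cases "f xb"; cases "f (xb(i := v))") auto
qed

locale fbf_setting = Gamma0_direct_sum m H f
  for m :: nat and H :: "nat \<Rightarrow> 'a::{real_inner,complete_space} set" and f +
  fixes G :: "nat \<Rightarrow> (nat \<Rightarrow> 'a) \<Rightarrow> 'a" and chi :: real
  assumes G_in: "\<forall>xx\<in>PH m H. \<forall>i\<in>{1..m}. G i xx \<in> H i"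
    and G_mono: "\<forall>xx\<in>PH m H. \<forall>yy\<in>PH m H. 0 \<le> (\<Sum>i\<in>{1..m}. (G i xx - G i yy) \<bullet> (xx i - yy i))"
    and G_lip: "\<forall>xx\<in>PH m H. \<forall>yy\<in>PH m H.
      (\<Sum>i\<in>{1..m}. (norm (G i xx - G i yy))\<^sup>2) \<le> chi\<^sup>2 * (\<Sum>i\<in>{1..m}. (norm (xx i - yy i))\<^sup>2)"
    and chi_pos: "0 < chi"
begin

abbreviation B :: "(nat \<Rightarrow> 'a) \<Rightarrow> nat \<Rightarrow> 'a" where
  "B \<equiv> grad_op m G"

definition zeros :: "(nat \<Rightarrow> 'a) set" where
  "zeros = {w \<in> PH m H. - B w \<in> subdiff m H f w}"

lemma B_PH: "xx \<in> PH m H \<Longrightarrow> B xx \<in> PH m H"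
  using G_in unfolding grad_op_def PH_def by auto

lemma B_monotone: "xx \<in> PH m H \<Longrightarrow> yy \<in> PH m H \<Longrightarrow> 0 \<le> pinner m (B xx - B yy) (xx - yy)"
  using G_mono unfolding pinner_def grad_op_def by auto

lemma B_lipschitz: "xx \<in> PH m H \<Longrightarrow> yy \<in> PH m H \<Longrightarrow> pnorm m (B xx - B yy) \<le> chi * pnorm m (xx - yy)"
  using G_lip real_sqrt_le_mono[of "pnormsq m (B xx - B yy)" "chi\<^sup>2 * pnormsq m (xx - yy)"] chi_pos
  unfolding pnorm_def pnormsq_def grad_op_def by (auto simp: real_sqrt_mult)

lemma zeros_PH: "w \<in> zeros \<Longrightarrow> w \<in> PH m H"
  by (simp add: zeros_def)

lemma fbf_step_fejer:
  assumes xx: "xx \<in> PH m H" and zz: "zz \<in> zeros" and lam: "0 < lam"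
    and p: "p = prox_f lam (xx - pscale lam (B xx))"
  shows "pnormsq m (p + pscale lam (B xx - B p) - zz)
    \<le> pnormsq m (xx - zz) - (1 - (lam * chi)\<^sup>2) * pnormsq m (xx - p)"
proof -
  define y where "y = xx - pscale lam (B xx)"
  have y: "y \<in> PH m H" unfolding y_def using xx B_PH PH_diff PH_pscale subspaces by blast
  have pPH: "p \<in> PH m H" unfolding p using prox_f_PH[OF lam] .
  have zzPH: "zz \<in> PH m H" using zz by (rule zeros_PH)
  define D where "D = xx - p"
  define E where "E = pscale lam (B xx - B p)"
  define Y where "Y = D - E"
  have "0 \<le> pinner m (pscale (1 / lam) (y - p) - - B zz) (p - zz)"
    using subdiff_monotone[OF prox_f_subdiff[OF lam y]] zz unfolding p y_def zeros_def by blast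
  moreover have "0 \<le> pinner m (B p - B zz) (p - zz)" by (rule B_monotone[OF pPH zzPH])
  moreover have "Y = pscale lam (pscale (1 / lam) (y - p) - - B zz) + pscale lam (B p - B zz)"
    unfolding Y_def D_def E_def y_def using lam by (simp add: fun_eq_iff algebra_simps)
  ultimately have Y_nonneg: "0 \<le> pinner m Y (p - zz)"
    using lam by (simp add: pinner_add_left pinner_pscale_left)
  have "pnormsq m (B xx - B p) \<le> chi\<^sup>2 * pnormsq m D"
    using pnormsq_le_if_pnorm_le[OF B_lipschitz[OF xx pPH]] chi_pos unfolding D_def by simp
  then have E_le: "pnormsq m E \<le> (lam * chi)\<^sup>2 * pnormsq m D"
    unfolding E_def pnormsq_pscale using lam by (simp add: power_mult_distrib)
  have "p + E - zz = (xx - zz) - Y" "xx - zz = (p - zz) + D"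
    unfolding Y_def D_def by (simp_all add: algebra_simps)
  then have "pnormsq m (p + E - zz)
      = pnormsq m (xx - zz) - 2 * pinner m Y (p - zz) - pnormsq m D + pnormsq m E"
    unfolding pnormsq_eq_pinner Y_def by (simp add: pinner_simps pinner_commute algebra_simps)
  with Y_nonneg E_le show ?thesis unfolding E_def D_def by (simp add: algebra_simps)
qed

text \<open>Take the resolvent point \<open>w0 = prox (qq - lam B qq)\<close> and its subgradient
  \<open>v0 = (qq - lam B qq - w0) / lam\<close>: the hypothesis forces \<open>\<parallel>qq - w0\<parallel>\<^sup>2 \<le> lam chi \<parallel>qq - w0\<parallel>\<^sup>2\<close>,
  hence \<open>qq = w0\<close>.\<close>

lemma zero_if_monotone_ineq:
  assumes qq: "qq \<in> PH m H" and lam: "0 < lam" "lam * chi < 1"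
    and ineq: "\<And>w v. v \<in> subdiff m H f w \<Longrightarrow> pinner m (v + B w) (qq - w) \<le> 0"
  shows "qq \<in> zeros"
proof -
  define y where "y = qq - pscale lam (B qq)"
  have y: "y \<in> PH m H" unfolding y_def using qq B_PH PH_diff PH_pscale subspaces by blast
  define w0 where "w0 = prox_f lam y"
  define v0 where "v0 = pscale (1 / lam) (y - w0)"
  have v0: "v0 \<in> subdiff m H f w0" unfolding v0_def w0_def by (rule prox_f_subdiff[OF lam(1) y])
  have w0: "w0 \<in> PH m H" unfolding w0_def by (rule prox_f_PH[OF lam(1)])
  have "pscale lam (v0 + B w0) = (qq - w0) - pscale lam (B qq - B w0)"
    unfolding v0_def y_def using lam by (simp add: fun_eq_iff algebra_simps)
  then have "lam * pinner m (v0 + B w0) (qq - w0) = pnormsq m (qq - w0) - lam * pinner m (B qq - B w0) (qq - w0)"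
    by (metis pinner_pscale_left pinner_diff_left pnormsq_eq_pinner)
  moreover have "lam * pinner m (v0 + B w0) (qq - w0) \<le> 0"
    using ineq[OF v0] lam by (simp add: mult_nonneg_nonpos)
  moreover have "pinner m (B qq - B w0) (qq - w0) \<le> chi * pnormsq m (qq - w0)"
  proof -
    have "pinner m (B qq - B w0) (qq - w0) \<le> pnorm m (B qq - B w0) * pnorm m (qq - w0)"
      by (rule pinner_le_pnorm_mult)
    also have "\<dots> \<le> chi * pnorm m (qq - w0) * pnorm m (qq - w0)"
      by (rule mult_right_mono[OF B_lipschitz[OF qq w0] pnorm_nonneg])
    finally show ?thesis by (simp add: pnorm_power2[symmetric] power2_eq_square)
  qed
  then have "lam * pinner m (B qq - B w0) (qq - w0) \<le> lam * (chi * pnormsq m (qq - w0))"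
    using lam by (intro mult_left_mono) auto
  ultimately have "(1 - lam * chi) * pnormsq m (qq - w0) \<le> 0" by (simp add: algebra_simps)
  then have "pnormsq m (qq - w0) = 0" using lam pnormsq_nonneg[of m "qq - w0"]
    by (simp add: mult_le_0_iff)
  then have "qq = w0" using PH_eqI[OF qq w0] by (simp add: pnorm_def)
  moreover have "v0 = - B qq" unfolding v0_def y_def \<open>qq = w0\<close>[symmetric] using lam
    by (simp add: fun_eq_iff)
  ultimately show ?thesis using v0 qq unfolding zeros_def by simp
qed

end

section \<open>The perturbed iteration\<close>

locale fbf_iteration = fbf_setting m H f G chi
  for m :: nat and H :: "nat \<Rightarrow> 'a::{real_inner,complete_space} set" and f G chi +
  fixes eps :: real and \<gamma> :: "nat \<Rightarrow> real" and a b c x y p q :: "nat \<Rightarrow> nat \<Rightarrow> 'a"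
    and z :: "nat \<Rightarrow> 'a"
  assumes z_zero: "z \<in> PH m H" "- grad_op m G z \<in> subdiff m H f z"
    and eps: "0 < eps" "eps < 1 / (chi + 1)"
    and gamma: "\<forall>n. eps \<le> \<gamma> n \<and> \<gamma> n \<le> (1 - eps) / chi"
    and x0: "x 0 \<in> PH m H"
    and abc: "\<forall>i\<in>{1..m}. (\<forall>n. a n i \<in> H i \<and> b n i \<in> H i \<and> c n i \<in> H i)
        \<and> summable (\<lambda>n. norm (a n i)) \<and> summable (\<lambda>n. norm (b n i)) \<and> summable (\<lambda>n. norm (c n i))"
    and y_def: "\<forall>n. y n = (\<lambda>i. if i \<in> {1..m} then x n i - \<gamma> n *\<^sub>R (G i (x n) + a n i) else 0)"
    and p_def: "\<forall>n. p n = (\<lambda>i. if i \<in> {1..m}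
        then prox m H (\<lambda>w. ereal (\<gamma> n) * f w) (y n) i + b n i else 0)"
    and q_def: "\<forall>n. q n = (\<lambda>i. if i \<in> {1..m} then p n i - \<gamma> n *\<^sub>R (G i (p n) + c n i) else 0)"
    and x_def: "\<forall>n. x (Suc n) = (\<lambda>i. if i \<in> {1..m} then x n i - y n i + q n i else 0)"
begin

lemma z_in_zeros: "z \<in> zeros"
  using z_zero unfolding zeros_def by blast

lemma gamma_pos: "0 < \<gamma> n"
  using gamma eps by (meson less_le_trans)

lemma gamma_chi_le: "\<gamma> n * chi \<le> 1 - eps"
  using gamma chi_pos by (simp add: pos_le_divide_eq)

lemma gamma_le: "\<gamma> n \<le> 1 / chi"
  using gamma_chi_le[of n] eps chi_pos by (simp add: pos_le_divide_eq)

lemma eps_chi_less_1: "eps * chi < 1"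
proof -
  have "eps * chi < 1 / (chi + 1) * chi" using eps chi_pos by (intro mult_strict_right_mono) auto
  also have "\<dots> < 1" using chi_pos by (simp add: field_simps)
  finally show ?thesis .
qed

lemma one_minus_eps_sq_less_1: "(1 - eps)\<^sup>2 < 1"
proof -
  have "1 / (chi + 1) < 1" using chi_pos by simp
  then have "(1 - eps)\<^sup>2 < 1\<^sup>2" using eps by (intro power_strict_mono) auto
  then show ?thesis by simp
qed

lemma iterates_PH: "x n \<in> PH m H" "y n \<in> PH m H" "p n \<in> PH m H"
proof -
  have abc_H: "a n i \<in> H i" "b n i \<in> H i" "c n i \<in> H i" if "i \<in> {1..m}" for n i
    using abc that by auto
  have sub: "subspace (H i)" if "i \<in> {1..m}" for i using subspaces that by blast
  have y: "y n \<in> PH m H" if "x n \<in> PH m H" for n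
    using that abc_H G_in sub unfolding PH_def y_def[rule_format]
    by (auto intro!: subspace_diff subspace_add subspace_scale)
  have p: "p n \<in> PH m H" if "x n \<in> PH m H" for n
    using prox_f_PH[OF gamma_pos, of n "y n"] abc_H sub unfolding PH_def p_def[rule_format] prox_f_def
    by (auto intro!: subspace_add)
  have "x (Suc n) \<in> PH m H" if "x n \<in> PH m H" for n
  proof -
    have "q n \<in> PH m H"
      using p[OF that] abc_H G_in sub unfolding PH_def q_def[rule_format]
      by (auto intro!: subspace_diff subspace_add subspace_scale)
    then show ?thesis using that y[OF that] sub unfolding PH_def x_def[rule_format]
      by (auto intro!: subspace_diff subspace_add)
  qed
  then show x: "x n \<in> PH m H" by (induction n) (use x0 in auto)
  show "y n \<in> PH m H" "p n \<in> PH m H" using y[OF x] p[OF x] .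
qed

definition err :: "nat \<Rightarrow> real" where
  "err n = (\<Sum>i\<in>{1..m}. norm (a n i) + norm (b n i) + norm (c n i))"

text \<open>The error-free iteration from \<open>x n\<close>: \<open>xhat n\<close> is the exact proximal point and \<open>xnext n\<close>
  the exact next iterate.\<close>

definition xhat :: "nat \<Rightarrow> nat \<Rightarrow> 'a" where
  "xhat n = prox_f (\<gamma> n) (x n - pscale (\<gamma> n) (B (x n)))"

definition xnext :: "nat \<Rightarrow> nat \<Rightarrow> 'a" where
  "xnext n = xhat n + pscale (\<gamma> n) (B (x n) - B (xhat n))"

lemma xhat_PH: "xhat n \<in> PH m H"
  unfolding xhat_def by (rule prox_f_PH[OF gamma_pos])

lemma err_nonneg: "0 \<le> err n"
  unfolding err_def by (intro sum_nonneg) auto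

lemma err_summable: "summable err"
  unfolding err_def using abc by (intro summable_sum summable_add) auto

lemma pnorm_abc_le_err: "pnorm m (a n) \<le> err n" "pnorm m (b n) \<le> err n" "pnorm m (c n) \<le> err n"
  using pnorm_le_sum_norm[of m "a n"] pnorm_le_sum_norm[of m "b n"] pnorm_le_sum_norm[of m "c n"]
    sum_mono[of "{1..m}" "\<lambda>i. norm (a n i)" "\<lambda>i. norm (a n i) + norm (b n i) + norm (c n i)"]
    sum_mono[of "{1..m}" "\<lambda>i. norm (b n i)" "\<lambda>i. norm (a n i) + norm (b n i) + norm (c n i)"]
    sum_mono[of "{1..m}" "\<lambda>i. norm (c n i)" "\<lambda>i. norm (a n i) + norm (b n i) + norm (c n i)"]
  unfolding err_def by force+

lemma p_xhat_le: "pnorm m (p n - xhat n) \<le> (1 + 1 / chi) * err n"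
proof -
  let ?y = "x n - pscale (\<gamma> n) (B (x n))"
  have y_PH: "?y \<in> PH m H" using iterates_PH(1) B_PH PH_diff PH_pscale subspaces by blast
  have "pnorm m (p n - prox_f (\<gamma> n) (y n)) = pnorm m (b n)"
    by (rule pnorm_cong) (simp add: p_def prox_f_def)
  moreover have "pnorm m (y n - ?y) = \<gamma> n * pnorm m (a n)"
    using pnorm_cong[of m "y n - ?y" "pscale (- \<gamma> n) (a n)"] gamma_pos[of n]
    by (simp add: y_def grad_op_def algebra_simps pnorm_pscale)
  then have "pnorm m (prox_f (\<gamma> n) (y n) - xhat n) \<le> \<gamma> n * err n"
    using prox_f_nonexpansive[OF gamma_pos iterates_PH(2) y_PH] pnorm_abc_le_err(1)[of n] gamma_pos[of n]
    unfolding xhat_def by (smt (verit) mult_left_mono)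
  moreover have "\<gamma> n * err n \<le> 1 / chi * err n" using gamma_le err_nonneg by (intro mult_right_mono)
  ultimately show ?thesis
    using pnorm_triangle[of m "p n - prox_f (\<gamma> n) (y n)" "prox_f (\<gamma> n) (y n) - xhat n"] pnorm_abc_le_err(2)[of n]
    by (simp add: algebra_simps)
qed

lemma x_Suc_xnext_le: "pnorm m (x (Suc n) - xnext n) \<le> (2 + 4 / chi) * err n"
proof -
  let ?d = "p n - xhat n"
  have "pnorm m (x (Suc n) - xnext n)
      = pnorm m ((?d - pscale (\<gamma> n) (B (p n) - B (xhat n))) + pscale (\<gamma> n) (a n - c n))"
    by (rule pnorm_cong) (simp add: x_def y_def q_def xnext_def grad_op_def algebra_simps)
  also have "\<dots> \<le> pnorm m (?d - pscale (\<gamma> n) (B (p n) - B (xhat n))) + pnorm m (pscale (\<gamma> n) (a n - c n))"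
    by (rule pnorm_triangle)
  also have "\<dots> \<le> (pnorm m ?d + \<gamma> n * pnorm m (B (p n) - B (xhat n))) + \<gamma> n * (pnorm m (a n) + pnorm m (c n))"
    using pnorm_diff_triangle[of m ?d "pscale (\<gamma> n) (B (p n) - B (xhat n))"]
      pnorm_diff_triangle[of m "a n" "c n"] gamma_pos[of n]
    by (intro add_mono) (simp_all add: pnorm_pscale mult_left_mono)
  also have "\<dots> \<le> ((1 + 1 / chi) * err n + 1 * ((1 + 1 / chi) * err n)) + 1 / chi * (err n + err n)"
  proof (intro add_mono)
    show "pnorm m ?d \<le> (1 + 1 / chi) * err n" by (rule p_xhat_le)
    have "\<gamma> n * pnorm m (B (p n) - B (xhat n)) \<le> (\<gamma> n * chi) * pnorm m ?d"
      using B_lipschitz[OF iterates_PH(3) xhat_PH] gamma_pos[of n] by (simp add: mult_left_mono)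
    also have "\<dots> \<le> 1 * ((1 + 1 / chi) * err n)"
      using gamma_chi_le[of n] eps p_xhat_le[of n] pnorm_nonneg[of m ?d] gamma_pos[of n] chi_pos
      by (intro mult_mono) auto
    finally show "\<gamma> n * pnorm m (B (p n) - B (xhat n)) \<le> 1 * ((1 + 1 / chi) * err n)" .
    show "\<gamma> n * (pnorm m (a n) + pnorm m (c n)) \<le> 1 / chi * (err n + err n)"
      using gamma_le[of n] pnorm_abc_le_err[of n] gamma_pos[of n] chi_pos
        pnorm_nonneg[of m "a n"] pnorm_nonneg[of m "c n"]
      by (intro mult_mono add_mono) auto
  qed
  also have "\<dots> = (2 + 4 / chi) * err n" by (simp add: algebra_simps)
  finally show ?thesis .
qed

lemma xnext_fejer:
  assumes zz: "zz \<in> zeros"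
  shows "pnormsq m (xnext n - zz) \<le> pnormsq m (x n - zz) - (1 - (1 - eps)\<^sup>2) * pnormsq m (x n - xhat n)"
proof -
  have "0 \<le> \<gamma> n * chi" using gamma_pos[of n] chi_pos by simp
  then have "(\<gamma> n * chi)\<^sup>2 \<le> (1 - eps)\<^sup>2" using gamma_chi_le[of n] by (intro power_mono) auto
  then have "(1 - (1 - eps)\<^sup>2) * pnormsq m (x n - xhat n) \<le> (1 - (\<gamma> n * chi)\<^sup>2) * pnormsq m (x n - xhat n)"
    using pnormsq_nonneg by (intro mult_right_mono) auto
  with fbf_step_fejer[OF iterates_PH(1) zz gamma_pos xhat_def[of n]] show ?thesis
    unfolding xnext_def by simp
qed

lemma dist_zero_step:
  assumes zz: "zz \<in> zeros"
  shows "pnorm m (xnext n - zz) \<le> pnorm m (x n - zz)"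
    and "pnorm m (x (Suc n) - zz) \<le> pnorm m (x n - zz) + (2 + 4 / chi) * err n"
proof -
  have "0 \<le> (1 - (1 - eps)\<^sup>2) * pnormsq m (x n - xhat n)"
    using one_minus_eps_sq_less_1 pnormsq_nonneg[of m "x n - xhat n"] by simp
  then show le: "pnorm m (xnext n - zz) \<le> pnorm m (x n - zz)"
    using xnext_fejer[OF zz, of n] by (simp add: pnorm_le_iff_pnormsq_le)
  have "pnorm m (x (Suc n) - zz) \<le> pnorm m (x (Suc n) - xnext n) + pnorm m (xnext n - zz)"
    using pnorm_triangle[of m "x (Suc n) - xnext n" "xnext n - zz"] by simp
  then show "pnorm m (x (Suc n) - zz) \<le> pnorm m (x n - zz) + (2 + 4 / chi) * err n"
    using le x_Suc_xnext_le[of n] by linarith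
qed

lemma dist_zero_convergent: "zz \<in> zeros \<Longrightarrow> convergent (\<lambda>n. pnorm m (x n - zz))"
  using err_summable chi_pos err_nonneg
  by (intro quasi_Fejer_convergent[where \<epsilon>="\<lambda>n. (2 + 4 / chi) * err n"] dist_zero_step(2) pnorm_nonneg
      summable_mult mult_nonneg_nonneg) auto

lemma residual_sq_bound:
  assumes zz: "zz \<in> zeros" and A: "\<And>n. pnorm m (x n - zz) \<le> A"
  shows "(1 - (1 - eps)\<^sup>2) * pnormsq m (x n - xhat n)
    \<le> (pnorm m (x n - zz))\<^sup>2 - (pnorm m (x (Suc n) - zz))\<^sup>2
      + 2 * A * ((2 + 4 / chi) * err n) + ((2 + 4 / chi) * err n)\<^sup>2"
proof -
  define P where "P = pnorm m (xnext n - zz)"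
  define E where "E = (2 + 4 / chi) * err n"
  have "0 \<le> E" unfolding E_def using chi_pos err_nonneg by simp
  have "P \<le> pnorm m (x n - zz)" "pnorm m (x (Suc n) - zz) \<le> P + E"
    unfolding P_def E_def using dist_zero_step[OF zz, of n] x_Suc_xnext_le[of n]
      pnorm_triangle[of m "x (Suc n) - xnext n" "xnext n - zz"] by auto
  then have "2 * P * E \<le> 2 * A * E" using A[of n] \<open>0 \<le> E\<close> by (intro mult_right_mono) auto
  moreover have "(pnorm m (x (Suc n) - zz))\<^sup>2 \<le> (P + E)\<^sup>2"
    using \<open>pnorm m (x (Suc n) - zz) \<le> P + E\<close> pnorm_nonneg by (intro power_mono) auto
  moreover have "P\<^sup>2 \<le> (pnorm m (x n - zz))\<^sup>2 - (1 - (1 - eps)\<^sup>2) * pnormsq m (x n - xhat n)"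
    using xnext_fejer[OF zz, of n] unfolding P_def pnorm_power2 .
  ultimately show ?thesis unfolding E_def[symmetric] power2_sum by linarith
qed

lemma residual_tendsto_zero: "(\<lambda>n. pnorm m (x n - xhat n)) \<longlonglongrightarrow> 0"
proof -
  define \<eta> where "\<eta> = 1 - (1 - eps)\<^sup>2"
  have "0 < \<eta>" unfolding \<eta>_def using one_minus_eps_sq_less_1 by simp
  obtain L where L: "(\<lambda>n. pnorm m (x n - z)) \<longlonglongrightarrow> L"
    using dist_zero_convergent[OF z_in_zeros] unfolding convergent_def by blast
  obtain A where "\<forall>n. norm (pnorm m (x n - z)) \<le> A"
    using convergent_imp_Bseq[OF convergentI[OF L]] by (auto simp: Bseq_def)
  then have A: "pnorm m (x n - z) \<le> A" for n by (simp add: pnorm_nonneg)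
  define R where "R n = (pnorm m (x n - z))\<^sup>2 - (pnorm m (x (Suc n) - z))\<^sup>2
    + 2 * A * ((2 + 4 / chi) * err n) + ((2 + 4 / chi) * err n)\<^sup>2" for n
  have le: "pnormsq m (x n - xhat n) \<le> R n / \<eta>" for n
  proof -
    have "pnormsq m (x n - xhat n) * \<eta> \<le> R n"
      using residual_sq_bound[OF z_in_zeros A, of n] unfolding R_def \<eta>_def by (simp add: mult.commute)
    with \<open>0 < \<eta>\<close> show ?thesis by (simp add: pos_le_divide_eq)
  qed
  have "R \<longlonglongrightarrow> L\<^sup>2 - L\<^sup>2 + 2 * A * ((2 + 4 / chi) * 0) + ((2 + 4 / chi) * 0)\<^sup>2"
    unfolding R_def by (intro tendsto_intros L LIMSEQ_Suc[OF L] summable_LIMSEQ_zero[OF err_summable])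
  then have R_lim: "(\<lambda>n. R n / \<eta>) \<longlonglongrightarrow> 0" using tendsto_divide_zero[of R sequentially \<eta>] by simp
  have "(\<lambda>n. pnormsq m (x n - xhat n)) \<longlonglongrightarrow> 0"
    using le by (intro tendsto_sandwich[OF _ _ tendsto_const R_lim]) (simp_all add: pnormsq_nonneg)
  then have "(\<lambda>n. sqrt (pnormsq m (x n - xhat n))) \<longlonglongrightarrow> sqrt 0" by (rule tendsto_real_sqrt)
  then show ?thesis unfolding pnorm_def by simp
qed

lemma x_p_tendsto_zero: "(\<lambda>n. pnorm m (x n - p n)) \<longlonglongrightarrow> 0"
proof (rule tendsto_sandwich[OF _ _ tendsto_const])
  have "pnorm m (x n - p n) \<le> pnorm m (x n - xhat n) + (1 + 1 / chi) * err n" for n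
    using pnorm_triangle[of m "x n - xhat n" "xhat n - p n"] p_xhat_le[of n]
      pnorm_minus_commute[of m "xhat n" "p n"] by simp
  then show "\<forall>\<^sub>F n in sequentially. pnorm m (x n - p n) \<le> pnorm m (x n - xhat n) + (1 + 1 / chi) * err n"
    by simp
  show "(\<lambda>n. pnorm m (x n - xhat n) + (1 + 1 / chi) * err n) \<longlonglongrightarrow> 0"
    using tendsto_add[OF residual_tendsto_zero tendsto_mult_right_zero[OF summable_LIMSEQ_zero[OF err_summable]]]
    by simp
qed (simp add: pnorm_nonneg)

lemma xhat_subgradient:
  "pscale (1 / \<gamma> n) (x n - pscale (\<gamma> n) (B (x n)) - xhat n) \<in> subdiff m H f (xhat n)"
  unfolding xhat_def
  using prox_f_subdiff[OF gamma_pos] iterates_PH(1) B_PH PH_diff PH_pscale subspaces by blast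

lemma xhat_subgradient_plus_B_le:
  "pnorm m (pscale (1 / \<gamma> n) (x n - pscale (\<gamma> n) (B (x n)) - xhat n) + B (xhat n))
    \<le> (1 / eps + chi) * pnorm m (x n - xhat n)"
proof -
  have "pnorm m (pscale (1 / \<gamma> n) (x n - pscale (\<gamma> n) (B (x n)) - xhat n) + B (xhat n))
      = pnorm m (pscale (1 / \<gamma> n) (x n - xhat n) - (B (x n) - B (xhat n)))"
    using gamma_pos[of n] by (intro pnorm_cong) (simp add: algebra_simps)
  also have "\<dots> \<le> 1 / \<gamma> n * pnorm m (x n - xhat n) + chi * pnorm m (x n - xhat n)"
    using pnorm_diff_triangle[of m "pscale (1 / \<gamma> n) (x n - xhat n)" "B (x n) - B (xhat n)"]
      B_lipschitz[OF iterates_PH(1)[of n] xhat_PH[of n]] gamma_pos[of n] by (simp add: pnorm_pscale)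
  also have "\<dots> \<le> 1 / eps * pnorm m (x n - xhat n) + chi * pnorm m (x n - xhat n)"
    using gamma eps pnorm_nonneg by (intro add_right_mono mult_right_mono) (auto simp: frac_le)
  finally show ?thesis by (simp add: algebra_simps)
qed

lemma xhat_dist_bounded: "\<exists>K. \<forall>n. pnorm m (xhat n - w) \<le> K"
proof -
  note z = z_in_zeros
  obtain K1 where "\<forall>n. norm (pnorm m (x n - z)) \<le> K1"
    using convergent_imp_Bseq[OF dist_zero_convergent[OF z]] by (auto simp: Bseq_def)
  then have K1: "pnorm m (x n - z) \<le> K1" for n by (simp add: pnorm_nonneg)
  obtain K2 where "\<forall>n. norm (pnorm m (x n - xhat n)) \<le> K2"
    using convergent_imp_Bseq[OF convergentI[OF residual_tendsto_zero]] by (auto simp: Bseq_def)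
  then have K2: "pnorm m (x n - xhat n) \<le> K2" for n by (simp add: pnorm_nonneg)
  have "pnorm m (xhat n - w) \<le> pnorm m (x n - xhat n) + pnorm m (x n - z) + pnorm m (z - w)" for n
    using pnorm_triangle[of m "xhat n - x n" "(x n - z) + (z - w)"] pnorm_triangle[of m "x n - z" "z - w"]
      pnorm_minus_commute[of m "xhat n" "x n"] by (simp add: algebra_simps)
  then have "pnorm m (xhat n - w) \<le> K2 + K1 + pnorm m (z - w)" for n
    using K1[of n] K2[of n] by (smt (verit))
  then show ?thesis by blast
qed

lemma subdiff_plus_B_ineq_at_xhat:
  assumes v: "v \<in> subdiff m H f w"
  shows "pinner m (v + B w) (xhat n - w) \<le> (1 / eps + chi) * pnorm m (x n - xhat n) * pnorm m (xhat n - w)"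
proof -
  let ?u = "pscale (1 / \<gamma> n) (x n - pscale (\<gamma> n) (B (x n)) - xhat n)"
  have w: "w \<in> PH m H" using subdiff_dom_f[OF v] dom_f_PH by blast
  have "0 \<le> pinner m (?u - v) (xhat n - w)" by (rule subdiff_monotone[OF xhat_subgradient v])
  moreover have "0 \<le> pinner m (B (xhat n) - B w) (xhat n - w)" by (rule B_monotone[OF xhat_PH w])
  moreover have "pinner m (?u + B (xhat n)) (xhat n - w) - pinner m (v + B w) (xhat n - w)
      = pinner m (?u - v) (xhat n - w) + pinner m (B (xhat n) - B w) (xhat n - w)"
    by (simp only: pinner_add_left pinner_diff_left)
  ultimately have "pinner m (v + B w) (xhat n - w) \<le> pinner m (?u + B (xhat n)) (xhat n - w)"
    by linarith
  also have "\<dots> \<le> pnorm m (?u + B (xhat n)) * pnorm m (xhat n - w)" by (rule pinner_le_pnorm_mult)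
  also have "\<dots> \<le> (1 / eps + chi) * pnorm m (x n - xhat n) * pnorm m (xhat n - w)"
    by (rule mult_right_mono[OF xhat_subgradient_plus_B_le pnorm_nonneg])
  finally show ?thesis .
qed

lemma xhat_weak_conv_subseq:
  assumes r: "strict_mono r" and wc: "\<forall>i\<in>{1..m}. weak_conv (\<lambda>k. x (r k) i) (xb i)"
  shows "\<forall>i\<in>{1..m}. weak_conv (\<lambda>k. xhat (r k) i) (xb i)"
proof
  fix i assume i: "i \<in> {1..m}"
  have lim: "(\<lambda>k. pnorm m (x (r k) - xhat (r k))) \<longlonglongrightarrow> 0"
    using LIMSEQ_subseq_LIMSEQ[OF residual_tendsto_zero r] by (simp add: o_def)
  have "norm (x (r k) i - xhat (r k) i) \<le> pnorm m (x (r k) - xhat (r k))" for k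
    using norm_le_pnorm[OF i, of "x (r k) - xhat (r k)"] by simp
  then have "(\<lambda>k. norm (x (r k) i - xhat (r k) i)) \<longlonglongrightarrow> 0"
    by (intro tendsto_sandwich[OF _ _ tendsto_const lim]) simp_all
  then show "weak_conv (\<lambda>k. xhat (r k) i) (xb i)"
    by (rule weak_conv_if_norm_diff_tendsto_zero[OF wc[rule_format, OF i]])
qed

text \<open>The left-hand side converges along the subsequence by weak convergence of \<open>xhat\<close>, the
  right-hand side of the bound at \<open>xhat\<close> tends to zero with the residual.\<close>

lemma weak_cluster_monotone_ineq:
  assumes r: "strict_mono r" and wc: "\<forall>i\<in>{1..m}. weak_conv (\<lambda>k. x (r k) i) (xb i)"
    and v: "v \<in> subdiff m H f w"
  shows "pinner m (v + B w) (xb - w) \<le> 0"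
proof -
  obtain K where K: "\<And>n. pnorm m (xhat n - w) \<le> K" using xhat_dist_bounded by blast
  have le: "pinner m (v + B w) (xhat n - w) \<le> (1 / eps + chi) * pnorm m (x n - xhat n) * K" for n
  proof -
    have "0 \<le> (1 / eps + chi) * pnorm m (x n - xhat n)"
      using eps chi_pos pnorm_nonneg[of m "x n - xhat n"] by simp
    then show ?thesis using subdiff_plus_B_ineq_at_xhat[OF v, of n] mult_left_mono[OF K[of n]] by fastforce
  qed
  have "(\<lambda>k. pinner m (xhat (r k)) (v + B w) - pinner m w (v + B w))
      \<longlonglongrightarrow> pinner m xb (v + B w) - pinner m w (v + B w)"
    using xhat_weak_conv_subseq[OF r wc] by (intro tendsto_diff tendsto_const pinner_tendsto_if_weak_conv)
  then have lhs: "(\<lambda>k. pinner m (v + B w) (xhat (r k) - w)) \<longlonglongrightarrow> pinner m (v + B w) (xb - w)"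
    by (simp only: pinner_diff_right pinner_commute[of m "v + B w"])
  have "(\<lambda>k. pnorm m (x (r k) - xhat (r k))) \<longlonglongrightarrow> 0"
    using LIMSEQ_subseq_LIMSEQ[OF residual_tendsto_zero r] by (simp add: o_def)
  then have "(\<lambda>k. (1 / eps + chi) * pnorm m (x (r k) - xhat (r k)) * K) \<longlonglongrightarrow> (1 / eps + chi) * 0 * K"
    by (intro tendsto_mult tendsto_const)
  then have rhs: "(\<lambda>k. (1 / eps + chi) * pnorm m (x (r k) - xhat (r k)) * K) \<longlonglongrightarrow> 0" by simp
  show ?thesis by (rule LIMSEQ_le[OF lhs rhs]) (use le in blast)
qed
lemma weak_cluster_in_zeros:
  assumes "strict_mono r" "xb \<in> PH m H" "\<forall>i\<in>{1..m}. weak_conv (\<lambda>k. x (r k) i) (xb i)"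
  shows "xb \<in> zeros"
  using zero_if_monotone_ineq[OF assms(2) eps(1) eps_chi_less_1] weak_cluster_monotone_ineq[OF assms(1,3)]
  by blast

lemma weak_convergence:
  "\<exists>xb\<in>zeros. \<forall>i\<in>{1..m}. weak_conv (\<lambda>n. x n i) (xb i) \<and> weak_conv (\<lambda>n. p n i) (xb i)"
proof -
  have "\<exists>xb\<in>zeros. xb \<in> PH m H \<and> (\<forall>i\<in>{1..m}. weak_conv (\<lambda>n. x n i) (xb i))"
    by (rule opial_direct_sum[OF closed_subspaces iterates_PH(1) z_in_zeros])
      (use dist_zero_convergent weak_cluster_in_zeros in auto)
  then obtain xb where xb: "xb \<in> zeros" and wx: "\<forall>i\<in>{1..m}. weak_conv (\<lambda>n. x n i) (xb i)"
    by blast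
  have "weak_conv (\<lambda>n. p n i) (xb i)" if i: "i \<in> {1..m}" for i
  proof (rule weak_conv_if_norm_diff_tendsto_zero[OF wx[rule_format, OF i]])
    have "norm (x n i - p n i) \<le> pnorm m (x n - p n)" for n
      using norm_le_pnorm[OF i, of "x n - p n"] by simp
    then show "(\<lambda>n. norm (x n i - p n i)) \<longlonglongrightarrow> 0"
      by (intro tendsto_sandwich[OF _ _ tendsto_const x_p_tendsto_zero]) simp_all
  qed
  then show ?thesis using xb wx by blast
qed

end

theorem theorem3p3:
  fixes m :: nat
    and H :: "nat \<Rightarrow> 'a::{real_inner, complete_space} set"
    and f :: "(nat \<Rightarrow> 'a) \<Rightarrow> ereal"
    and g :: "nat \<Rightarrow> (nat \<Rightarrow> 'a) \<Rightarrow> real"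
    and G :: "nat \<Rightarrow> (nat \<Rightarrow> 'a) \<Rightarrow> 'a"
    and z :: "nat \<Rightarrow> 'a"
    and chi eps :: real
    and \<gamma> :: "nat \<Rightarrow> real"
    and a b c :: "nat \<Rightarrow> nat \<Rightarrow> 'a"
    and x y p q :: "nat \<Rightarrow> nat \<Rightarrow> 'a"
  assumes m: "m \<ge> 2"
    and H_sub: "\<forall>i\<in>{1..m}. subspace (H i) \<and> closed (H i)"
    and f_Gamma0: "Gamma0 m H f"
    and g_convex: "\<forall>xx\<in>PH m H. \<forall>i\<in>{1..m}. convex_on (H i) (\<lambda>v. g i (xx(i := v)))"
    and G_in: "\<forall>xx\<in>PH m H. \<forall>i\<in>{1..m}. G i xx \<in> H i"
    and G_deriv: "\<forall>xx\<in>PH m H. \<forall>i\<in>{1..m}.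
        ((\<lambda>v. g i (xx(i := v))) has_derivative (\<lambda>h. G i xx \<bullet> h)) (at (xx i) within H i)"
    and G_mono: "\<forall>xx\<in>PH m H. \<forall>yy\<in>PH m H.
        0 \<le> (\<Sum>i\<in>{1..m}. (G i xx - G i yy) \<bullet> (xx i - yy i))"
    and z_zero: "z \<in> PH m H"
        "(\<lambda>i. if i \<in> {1..m} then - G i z else 0) \<in> subdiff m H f z"
    and chi_pos: "0 < chi"
    and G_lip: "\<forall>xx\<in>PH m H. \<forall>yy\<in>PH m H.
        (\<Sum>i\<in>{1..m}. (norm (G i xx - G i yy))\<^sup>2) \<le> chi\<^sup>2 * (\<Sum>i\<in>{1..m}. (norm (xx i - yy i))\<^sup>2)"
    and eps_pos: "0 < eps" "eps < 1 / (chi + 1)"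
    and gamma: "\<forall>n. eps \<le> \<gamma> n \<and> \<gamma> n \<le> (1 - eps) / chi"
    and x0: "x 0 \<in> PH m H"
    and abc: "\<forall>i\<in>{1..m}. (\<forall>n. a n i \<in> H i \<and> b n i \<in> H i \<and> c n i \<in> H i)
        \<and> summable (\<lambda>n. norm (a n i)) \<and> summable (\<lambda>n. norm (b n i)) \<and> summable (\<lambda>n. norm (c n i))"
    and y_def: "\<forall>n. y n = (\<lambda>i. if i \<in> {1..m} then x n i - \<gamma> n *\<^sub>R (G i (x n) + a n i) else 0)"
    and p_def: "\<forall>n. p n = (\<lambda>i. if i \<in> {1..m}
        then prox m H (\<lambda>w. ereal (\<gamma> n) * f w) (y n) i + b n i else 0)"
    and q_def: "\<forall>n. q n = (\<lambda>i. if i \<in> {1..m} then p n i - \<gamma> n *\<^sub>R (G i (p n) + c n i) else 0)"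
    and x_def: "\<forall>n. x (Suc n) = (\<lambda>i. if i \<in> {1..m} then x n i - y n i + q n i else 0)"
  shows "\<exists>xbar. solves_P m H f g xbar \<and>
    (\<forall>i\<in>{1..m}. weak_conv (\<lambda>n. x n i) (xbar i) \<and> weak_conv (\<lambda>n. p n i) (xbar i))"
proof -
  have "- grad_op m G z = (\<lambda>i. if i \<in> {1..m} then - G i z else 0)"
    by (simp add: grad_op_def fun_eq_iff)
  then have zero: "- grad_op m G z \<in> subdiff m H f z" using z_zero(2) by simp
  interpret fbf_iteration m H f G chi eps \<gamma> a b c x y p q z
    by unfold_locales (use assms zero in blast)+
  obtain xb where xb: "xb \<in> zeros"
    and conv: "\<forall>i\<in>{1..m}. weak_conv (\<lambda>n. x n i) (xb i) \<and> weak_conv (\<lambda>n. p n i) (xb i)"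
    using weak_convergence by blast
  have "solves_P m H f g xb"
    using solves_P_if_zero[OF subspaces] xb g_convex G_deriv unfolding zeros_def by blast
  with conv show ?thesis by blast
qed

end
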